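(* The quotient space $\widehat M=M/\mathbb{Z}_3$ is simply connected.
   Context: Let $G=\mathbb{R}^6$ with coordinates $(y_1,y_2,z_1,z_2,v_1,v_2)$ and multiplication $(y',z',v')\cdot(y,z,v)=\big(y_1+y_1',y_2+y_2',z_1+z_1',z_2+z_2',\ v_1+v_1'+(y_1'-y_2')z_1-(y_1'+2y_2')z_2,\ v_2+v_2'-(2y_1'+y_2')z_1+(y_2'-y_1')z_2\big)$; let $\Gamma=\{(y,z,v)\in\mathbb{Z}^6: v_1\equiv v_2\pmod 3\}$ (a discrete cocompact subgroup) and $N=\Gamma\backslash G$ (quotient by left multiplication). Let $T^2=\mathbb{Z}^2\backslash\mathbb{R}^2$ with coordinates $(x_1,x_2)$ and $M=T^2\times N$, a compact 8-dimensional nilmanifold. The map $\rho(x_1,x_2,y_1,y_2,z_1,z_2,v_1,v_2)=(-x_1-x_2,x_1,-y_1-y_2,y_1,-z_1-z_2,z_1,-v_1-v_2,v_1)$ is a Lie group automorphism of $\mathbb{R}^2\times G$ preserving $\mathbb{Z}^2\times\Gamma$, hence descends to a diffeomorphism of $M$ of order 3, generating a $\mathbb{Z}_3$-action on $M$ with $81$ fixed points. $\widehat M=M/\mathbb{Z}_3$. *)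

theory Defs
  imports "HOL-Analysis.Analysis"
begin

(* Points of R^2 x G = R^8, coordinates (x1,x2,y1,y2,z1,z2,v1,v2) *)
type_synonym pt = "real \<times> real \<times> real \<times> real \<times> real \<times> real \<times> real \<times> real"

fun mul :: "pt \<Rightarrow> pt \<Rightarrow> pt" where
  "mul (x1', x2', y1', y2', z1', z2', v1', v2') (x1, x2, y1, y2, z1, z2, v1, v2) =
     (x1 + x1', x2 + x2', y1 + y1', y2 + y2', z1 + z1', z2 + z2',
      v1 + v1' + (y1' - y2') * z1 - (y1' + 2 * y2') * z2,
      v2 + v2' - (2 * y1' + y2') * z1 + (y2' - y1') * z2)"

definition Lambda :: "pt set" where
  "Lambda = {(of_int x1, of_int x2, of_int y1, of_int y2, of_int z1, of_int z2, of_int v1, of_int v2)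
              | x1 x2 y1 y2 z1 z2 v1 v2 :: int. v1 mod 3 = v2 mod 3}"

fun rho :: "pt \<Rightarrow> pt" where
  "rho (x1, x2, y1, y2, z1, z2, v1, v2) =
     (- x1 - x2, x1, - y1 - y2, y1, - z1 - z2, z1, - v1 - v2, v1)"

definition quotient_topology :: "'a topology \<Rightarrow> ('a \<times> 'a) set \<Rightarrow> 'a set topology" where
  "quotient_topology X R =
     topology (\<lambda>U. U \<subseteq> topspace X // R \<and> openin X (\<Union>U))"

definition M_rel :: "(pt \<times> pt) set" where
  "M_rel = {(p, mul g p) | g p. g \<in> Lambda}"

definition M_top :: "pt set topology" where
  "M_top = quotient_topology euclidean M_rel"

(* the induced diffeomorphism of M: [p] \<mapsto> [rho p] *)
definition rho_M :: "pt set \<Rightarrow> pt set" where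
  "rho_M c = M_rel `` (rho ` c)"

definition Z3_rel :: "(pt set \<times> pt set) set" where
  "Z3_rel = {(c, (rho_M ^^ k) c) | c k. c \<in> topspace M_top \<and> k < 3}"

definition Mhat_top :: "pt set set topology" where
  "Mhat_top = quotient_topology M_top Z3_rel"

definition simply_connected_space :: "'a topology \<Rightarrow> bool" where
  "simply_connected_space X \<longleftrightarrow>
     path_connected_space X \<and>
     (\<forall>p. pathin X p \<and> p 1 = p 0 \<longrightarrow>
        homotopic_with (\<lambda>h. h 0 = p 0 \<and> h 1 = p 0)
          (top_of_set {0..1}) X p (\<lambda>t. p 0))"

end

theory Submission
  imports Defs
begin

(* Mhat is the quotient of R^8 by the group generated by the lattice Z^2 x Gamma and the rotation rho,
   acting by the affine deck maps p |-> g . rho^k p.  Near a point f only deck maps fixing f identify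
   points, so Mhat is locally a cone of segments ending at the image of f.  Cutting a loop into pieces
   lying in such cones and pushing every piece onto a broken line through the cone point, the loop
   becomes the image of a path in R^8 from some p to h p, with h a deck map.  Every deck map is a
   product of two deck maps with fixed points (g rho^k itself if k = 1, 2, and g = (g rho) rho^2), and
   the segments from a fixed point a of such a map to x and to its image fold onto each other in Mhat,
   so the loop contracts.  This is Armstrong's argument: an orbit space of a simply connected space is
   simply connected when the group is generated by elements with fixed points. *)

lemma istopology_quotient:
  assumes "equiv (topspace X) R"
  shows "istopology (\<lambda>U. U \<subseteq> topspace X // R \<and> openin X (\<Union>U))"
  unfolding istopology_def
proof (rule conjI; intro allI impI)
  fix S T assume S: "S \<subseteq> topspace X // R \<and> openin X (\<Union>S)" and T: "T \<subseteq> topspace X // R \<and> openin X (\<Union>T)"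
  have "\<Union>(S \<inter> T) = \<Union>S \<inter> \<Union>T"
    using quotient_disj[OF assms] S T by blast
  then show "S \<inter> T \<subseteq> topspace X // R \<and> openin X (\<Union>(S \<inter> T))"
    using S T by auto
next
  fix K assume "\<forall>S\<in>K. S \<subseteq> topspace X // R \<and> openin X (\<Union>S)"
  moreover have "\<Union>(\<Union>K) = (\<Union>S\<in>K. \<Union>S)"
    by blast
  ultimately show "\<Union>K \<subseteq> topspace X // R \<and> openin X (\<Union>(\<Union>K))"
    by auto
qed

lemma openin_quotient_topology:
  assumes "equiv (topspace X) R"
  shows "openin (quotient_topology X R) U \<longleftrightarrow> U \<subseteq> topspace X // R \<and> openin X (\<Union>U)"
  unfolding quotient_topology_def topology_inverse'[OF istopology_quotient[OF assms]] ..

lemma topspace_quotient_topology: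
  assumes "equiv (topspace X) R"
  shows "topspace (quotient_topology X R) = topspace X // R"
proof -
  have "openin (quotient_topology X R) (topspace X // R)"
    unfolding openin_quotient_topology[OF assms] Union_quotient[OF assms] by simp
  then show ?thesis
    unfolding topspace_def openin_quotient_topology[OF assms] by blast
qed

lemma openin_quotient_topology_iff_vimage:
  assumes R: "equiv (topspace X) R" and U: "U \<subseteq> topspace X // R"
  shows "openin (quotient_topology X R) U \<longleftrightarrow> openin X {x \<in> topspace X. R `` {x} \<in> U}"
proof -
  have "\<Union>U = {x \<in> topspace X. R `` {x} \<in> U}"
  proof
    show "\<Union>U \<subseteq> {x \<in> topspace X. R `` {x} \<in> U}"
    proof
      fix x assume "x \<in> \<Union>U"
      then obtain y where "x \<in> R `` {y}" "R `` {y} \<in> U" "y \<in> topspace X"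
        using U by (auto simp: quotient_def)
      then show "x \<in> {x \<in> topspace X. R `` {x} \<in> U}"
        using equiv_class_eq[OF R] R by (auto simp: equiv_def refl_on_def)
    qed
    show "{x \<in> topspace X. R `` {x} \<in> U} \<subseteq> \<Union>U"
      using equiv_class_self[OF R] by blast
  qed
  then show ?thesis
    using openin_quotient_topology[OF R] U by simp
qed

lemma equiv_funpow_orbits:
  assumes maps: "f ` S \<subseteq> S" and period: "\<And>x. x \<in> S \<Longrightarrow> (f ^^ n) x = x" and n: "n > 0"
  shows "equiv S {(x, (f ^^ k) x) | x k. x \<in> S \<and> k < n}"
proof -
  have in_S: "(f ^^ k) x \<in> S" if "x \<in> S" for k x
    using that maps by (induction k) auto
  have mod_n: "(f ^^ k) x = (f ^^ (k mod n)) x" if "x \<in> S" for k x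
  proof -
    have "(f ^^ (n * m)) x = x" for m
      using that by (induction m) (simp_all add: funpow_add period in_S)
    then have "(f ^^ (k mod n + n * (k div n))) x = (f ^^ (k mod n)) x"
      by (simp only: funpow_add comp_apply)
    then show ?thesis
      by simp
  qed
  show ?thesis
  proof (rule equivI)
    show "{(x, (f ^^ k) x) | x k. x \<in> S \<and> k < n} \<subseteq> S \<times> S"
      using in_S by auto
    show "refl_on S {(x, (f ^^ k) x) | x k. x \<in> S \<and> k < n}"
      unfolding refl_on_def using n by (auto intro!: exI[of _ 0])
    show "sym {(x, (f ^^ k) x) | x k. x \<in> S \<and> k < n}"
    proof (rule symI, clarify)
      fix x k assume x: "x \<in> S" and k: "k < n"
      have "(f ^^ ((n - k) mod n)) ((f ^^ k) x) = (f ^^ (((n - k) mod n + k) mod n)) x"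
        using mod_n[OF x] by (simp add: funpow_add)
      also have "((n - k) mod n + k) mod n = 0"
        using k by (simp add: mod_add_left_eq)
      finally show "\<exists>y j. ((f ^^ k) x, x) = (y, (f ^^ j) y) \<and> y \<in> S \<and> j < n"
        using in_S[OF x] n by (intro exI[of _ "(f ^^ k) x"] exI[of _ "(n - k) mod n"]) simp
    qed
    show "trans {(x, (f ^^ k) x) | x k. x \<in> S \<and> k < n}"
    proof (rule transI, clarify)
      fix x k j assume x: "x \<in> S" and "k < n" "j < n"
      have "(f ^^ j) ((f ^^ k) x) = (f ^^ ((j + k) mod n)) x"
        using mod_n[OF x] by (simp add: funpow_add)
      then show "\<exists>y i. (x, (f ^^ j) ((f ^^ k) x)) = (y, (f ^^ i) y) \<and> y \<in> S \<and> i < n"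
        using x n by (intro exI[of _ x] exI[of _ "(j + k) mod n"]) simp
    qed
  qed
qed

section \<open>Paths and their homotopies\<close>

lemma continuous_map_unit_square:
  fixes g :: "real \<times> real \<Rightarrow> 'a::topological_space"
  assumes "continuous_on ({0..1} \<times> {0..1}) g" and "g ` ({0..1} \<times> {0..1}) \<subseteq> S"
  shows "continuous_map (prod_topology (top_of_set {0..1}) (top_of_set {0..1})) (top_of_set S) g"
proof -
  have "prod_topology (top_of_set {0..1}) (top_of_set {0..1}) = top_of_set ({0..1::real} \<times> {0..1::real})"
    using subtopology_Times[of euclidean euclidean "{0..1::real}" "{0..1::real}"] by simp
  then show ?thesis
    using assms by (simp add: continuous_map_in_subtopology image_subset_iff Pi_iff)
qed

lemma homotopic_with_from_unit_square:
  fixes H :: "real \<times> real \<Rightarrow> 'a"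
  assumes "continuous_map (prod_topology (top_of_set {0..1}) (top_of_set {0..1})) Y H"
    and "\<And>t. t \<in> {0..1} \<Longrightarrow> H (0, t) = f t" and "\<And>t. t \<in> {0..1} \<Longrightarrow> H (1, t) = g t"
    and "\<And>s. s \<in> {0..1} \<Longrightarrow> H (s, 0) = y0 \<and> H (s, 1) = y1"
  shows "homotopic_with (\<lambda>h. h 0 = y0 \<and> h 1 = y1) (top_of_set {0..1}) Y f g"
proof -
  define H' where "H' x = (if snd x \<in> {0..1} then H x else if fst x = 0 then f (snd x) else g (snd x))"
    for x :: "real \<times> real"
  have "continuous_map (prod_topology (top_of_set {0..1}) (top_of_set {0..1})) Y H'"
    by (rule continuous_map_eq[OF assms(1)]) (auto simp: H'_def)
  moreover have "H' (0, t) = f t" "H' (1, t) = g t" for t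
    using assms(2,3) by (simp_all add: H'_def)
  moreover have "H' (s, 0) = y0 \<and> H' (s, 1) = y1" if "s \<in> {0..1}" for s
    using assms(4)[OF that] by (simp add: H'_def)
  ultimately show ?thesis
    unfolding homotopic_with_def by (intro exI[of _ H']) auto
qed

text \<open>The \<open>i\<close>-th of \<open>n\<close> pieces is run on \<open>[i/n, (i+1)/n]\<close>; the last piece also takes \<open>t = 1\<close>.\<close>

definition piece_index :: "nat \<Rightarrow> real \<Rightarrow> nat" where
  "piece_index n t = min (n - 1) (nat \<lfloor>real n * t\<rfloor>)"

definition concat_paths :: "nat \<Rightarrow> (nat \<Rightarrow> real \<Rightarrow> 'a) \<Rightarrow> real \<Rightarrow> 'a" where
  "concat_paths n c t = c (piece_index n t) (real n * t - real (piece_index n t))"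

lemma piece_index_less: "n > 0 \<Longrightarrow> piece_index n t < n"
  by (simp add: piece_index_def)

lemma piece_index_bounds:
  assumes "n > 0" and "t \<in> {0..1}"
  shows "piece_index n t < n" and "real (piece_index n t) \<le> real n * t"
    and "real n * t \<le> real (piece_index n t) + 1"
proof -
  have nt: "0 \<le> real n * t" "real n * t \<le> real n"
    using assms by auto
  show "piece_index n t < n"
    using assms(1) by (rule piece_index_less)
  show "real (piece_index n t) \<le> real n * t"
    unfolding piece_index_def using nt by linarith
  show "real n * t \<le> real (piece_index n t) + 1"
  proof (cases "nat \<lfloor>real n * t\<rfloor> \<le> n - 1")
    case True
    then show ?thesis unfolding piece_index_def using nt by (simp add: min_absorb2)
  next
    case False
    then show ?thesis unfolding piece_index_def using nt assms(1) by simp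
  qed
qed

lemma concat_paths_0: "concat_paths n c 0 = c 0 0"
  by (simp add: concat_paths_def piece_index_def)

lemma concat_paths_1: "n > 0 \<Longrightarrow> concat_paths n c 1 = c (n - 1) 1"
  by (simp add: concat_paths_def piece_index_def)

lemma concat_paths_eq:
  assumes agree: "\<And>i. Suc i < n \<Longrightarrow> c i 1 = c (Suc i) 0"
    and i: "i < n" and t: "real i \<le> real n * t" "real n * t \<le> real i + 1"
  shows "concat_paths n c t = c i (real n * t - real i)"
proof -
  have n: "n > 0" using i by simp
  have "t \<in> {0..1}"
  proof -
    have "0 \<le> real n * t" "real n * t \<le> real n" using i t by linarith+
    then show ?thesis using n by (simp add: zero_le_mult_iff)
  qed
  note j = piece_index_bounds[OF n this]
  define j where "j = piece_index n t"
  have "c j (real n * t - real j) = c i (real n * t - real i)"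
  proof (cases i j rule: linorder_cases)
    case less
    then have "j = Suc i" "real n * t = real j"
      using j t unfolding j_def by linarith+
    then show ?thesis using agree[of i] j(1) unfolding j_def by simp
  next
    case greater
    then have "i = Suc j" "real n * t = real i"
      using j t unfolding j_def by linarith+
    then show ?thesis using agree[of j] i by simp
  qed simp
  then show ?thesis unfolding concat_paths_def j_def .
qed

lemma concat_paths_subpaths:
  assumes "n > 0"
  shows "concat_paths n (\<lambda>i \<tau>. \<gamma> ((real i + \<tau>) / real n)) t = \<gamma> t"
  using assms by (simp add: concat_paths_def)

lemma pathin_subpath_piece:
  assumes \<gamma>: "pathin X \<gamma>" and i: "i < n"
  shows "pathin X (\<lambda>\<tau>. \<gamma> ((real i + \<tau>) / real n))"
proof -
  have "continuous_on {0..1} (\<lambda>\<tau>::real. (real i + \<tau>) / real n)"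
    using i by (intro continuous_intros) auto
  moreover have "(\<lambda>\<tau>::real. (real i + \<tau>) / real n) ` {0..1} \<subseteq> {0..1}"
    using i by (auto simp: field_split_simps)
  ultimately have "continuous_map (top_of_set {0..1}) (top_of_set {0..1}) (\<lambda>\<tau>. (real i + \<tau>) / real n)"
    by (simp add: continuous_map_in_subtopology image_subset_iff Pi_iff)
  from continuous_map_compose[OF this \<gamma>[unfolded pathin_def]] show ?thesis
    unfolding pathin_def o_def .
qed

lemma continuous_map_concat_paths_family:
  fixes H :: "nat \<Rightarrow> 'a \<times> real \<Rightarrow> 'b"
  assumes n: "n > 0"
    and cont: "\<And>i. i < n \<Longrightarrow> continuous_map (prod_topology Z (top_of_set {0..1})) Y (H i)"
    and agree: "\<And>i z. Suc i < n \<Longrightarrow> z \<in> topspace Z \<Longrightarrow> H i (z, 1) = H (Suc i) (z, 0)"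
  shows "continuous_map (prod_topology Z (top_of_set {0..1})) Y
           (\<lambda>(z, t). concat_paths n (\<lambda>i \<tau>. H i (z, \<tau>)) t)"
proof -
  let ?X = "prod_topology Z (top_of_set {0..1::real})"
  define T where "T i = topspace Z \<times> {t \<in> {0..1::real}. real i \<le> real n * t \<and> real n * t \<le> real i + 1}"
    for i :: nat
  define f where "f i x = H i (fst x, real n * snd x - real i)" for i x
  have piece_eq: "concat_paths n (\<lambda>k \<tau>. H k (fst x, \<tau>)) (snd x) = f i x" if "i < n" "x \<in> T i" for i x
  proof -
    have "fst x \<in> topspace Z" "real i \<le> real n * snd x" "real n * snd x \<le> real i + 1"
      using that(2) by (auto simp: T_def mem_Times_iff)
    then show ?thesis
      using concat_paths_eq[of n "\<lambda>k \<tau>. H k (fst x, \<tau>)" i "snd x"] agree that(1) by (simp add: f_def)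
  qed
  show ?thesis
  proof (rule pasting_lemma_closed[where I = "{..<n}" and T = T and f = f])
    show "closedin ?X (T i)" for i
    proof -
      have "closed {t::real. real i \<le> real n * t \<and> real n * t \<le> real i + 1}"
        by (intro closed_Collect_conj closed_Collect_le continuous_intros)
      from closedin_closed_Int[OF this, of "{0..1::real}"]
      have "closedin (top_of_set {0..1}) {t \<in> {0..1::real}. real i \<le> real n * t \<and> real n * t \<le> real i + 1}"
        by (simp only: Int_def Ball_def mem_Collect_eq conj_commute)
      then show ?thesis
        unfolding T_def closedin_prod_Times_iff by simp
    qed
    show "continuous_map (subtopology ?X (T i)) Y (f i)" if "i \<in> {..<n}" for i
    proof -
      have "continuous_map ?X euclideanreal (\<lambda>x. real n * snd x - real i)"
        by (intro continuous_intros continuous_map_into_fulltopology[OF continuous_map_snd])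
      then have snd_part: "continuous_map (subtopology ?X (T i)) (top_of_set {0..1}) (\<lambda>x. real n * snd x - real i)"
        by (intro continuous_map_into_subtopology continuous_map_from_subtopology) (auto simp: T_def)
      have "continuous_map (subtopology ?X (T i)) ?X (\<lambda>x. (fst x, real n * snd x - real i))"
        by (rule continuous_map_pairedI[OF continuous_map_from_subtopology[OF continuous_map_fst] snd_part])
      from continuous_map_compose[OF this cont] that show ?thesis
        unfolding f_def by (simp add: o_def)
    qed
    show "f i x = f j x" if "i \<in> {..<n}" "j \<in> {..<n}" "x \<in> topspace ?X \<inter> T i \<inter> T j" for i j x
      using piece_eq[of i x] piece_eq[of j x] that by simp
    show "\<exists>j. j \<in> {..<n} \<and> x \<in> T j \<and> (\<lambda>(z, t). concat_paths n (\<lambda>i \<tau>. H i (z, \<tau>)) t) x = f j x"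
      if "x \<in> topspace ?X" for x
    proof (intro exI conjI)
      show "piece_index n (snd x) \<in> {..<n}" "x \<in> T (piece_index n (snd x))"
        using piece_index_bounds[OF n, of "snd x"] that by (auto simp: T_def mem_Times_iff)
      then show "(\<lambda>(z, t). concat_paths n (\<lambda>i \<tau>. H i (z, \<tau>)) t) x = f (piece_index n (snd x)) x"
        using piece_eq by (simp add: case_prod_unfold)
    qed
  qed simp
qed

lemma pathin_concat_paths:
  assumes "n > 0" and "\<And>i. i < n \<Longrightarrow> pathin Y (c i)" and "\<And>i. Suc i < n \<Longrightarrow> c i 1 = c (Suc i) 0"
  shows "pathin Y (concat_paths n c)"
proof -
  let ?I = "top_of_set {0..1::real}"
  have family: "continuous_map (prod_topology ?I ?I) Y (\<lambda>(z, t). concat_paths n (\<lambda>i \<tau>. (c i \<circ> snd) (z, \<tau>)) t)"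
    using assms unfolding pathin_def
    by (intro continuous_map_concat_paths_family continuous_map_compose[OF continuous_map_snd]) auto
  have slice: "continuous_map ?I (prod_topology ?I ?I) (\<lambda>t. (0, t))"
    by (intro continuous_map_pairedI) (auto simp: continuous_map_id[unfolded id_def])
  have "continuous_map ?I Y
      ((\<lambda>(z, t). concat_paths n (\<lambda>i \<tau>. (c i \<circ> snd) (z, \<tau>)) t) \<circ> (\<lambda>t. (0::real, t)))"
    by (rule continuous_map_compose[OF slice family])
  also have "(\<lambda>(z, t). concat_paths n (\<lambda>i \<tau>. (c i \<circ> snd) (z, \<tau>)) t) \<circ> (\<lambda>t. (0::real, t)) = concat_paths n c"
    by (simp add: fun_eq_iff concat_paths_def)
  finally show ?thesis
    unfolding pathin_def .
qed

lemma homotopic_with_concat_paths: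
  assumes n: "n > 0"
    and hom: "\<And>i. i < n \<Longrightarrow> homotopic_with (\<lambda>h. h 0 = c i 0 \<and> h 1 = c i 1) (top_of_set {0..1}) Y (c i) (d i)"
    and agree: "\<And>i. Suc i < n \<Longrightarrow> c i 1 = c (Suc i) 0"
  shows "homotopic_with (\<lambda>h. h 0 = c 0 0 \<and> h 1 = c (n - 1) 1) (top_of_set {0..1}) Y
           (concat_paths n c) (concat_paths n d)"
proof -
  let ?I = "top_of_set {0..1::real}"
  have "\<forall>i\<in>{..<n}. \<exists>H. continuous_map (prod_topology ?I ?I) Y H \<and> (\<forall>x. H (0, x) = c i x) \<and>
      (\<forall>x. H (1, x) = d i x) \<and> (\<forall>s\<in>{0..1}. H (s, 0) = c i 0 \<and> H (s, 1) = c i 1)"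
    using hom unfolding homotopic_with_def by auto
  then obtain H where H: "\<And>i. i < n \<Longrightarrow> continuous_map (prod_topology ?I ?I) Y (H i)"
    "\<And>i x. i < n \<Longrightarrow> H i (0, x) = c i x" "\<And>i x. i < n \<Longrightarrow> H i (1, x) = d i x"
    "\<And>i s. i < n \<Longrightarrow> s \<in> {0..1} \<Longrightarrow> H i (s, 0) = c i 0 \<and> H i (s, 1) = c i 1"
    by (metis lessThan_iff)
  define G where "G = (\<lambda>(s, t). concat_paths n (\<lambda>i \<tau>. H i (s, \<tau>)) t)"
  have "continuous_map (prod_topology ?I ?I) Y G"
    unfolding G_def using H agree by (intro continuous_map_concat_paths_family[OF n]) auto
  moreover have "G (0, t) = concat_paths n c t" "G (1, t) = concat_paths n d t" for t
    using H(2,3) piece_index_less[OF n] by (simp_all add: G_def concat_paths_def)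
  moreover have "G (s, 0) = c 0 0 \<and> G (s, 1) = c (n - 1) 1" if "s \<in> {0..1}" for s
    using H(4)[OF _ that] n by (simp add: G_def concat_paths_0 concat_paths_1)
  ultimately show ?thesis
    unfolding homotopic_with_def by (intro exI[of _ G]) auto
qed

section \<open>Images of paths in a real vector space\<close>

definition broken_line :: "'a::real_normed_vector \<Rightarrow> 'a \<Rightarrow> 'a \<Rightarrow> real \<Rightarrow> 'a" where
  "broken_line a f b = linepath a f +++ (linepath f f +++ linepath f b)"

lemma path_broken_line: "path (broken_line a f b)"
  unfolding broken_line_def by (intro path_join_imp) auto

lemma broken_line_0 [simp]: "broken_line a f b 0 = a"
  and broken_line_1 [simp]: "broken_line a f b 1 = b"
  by (simp_all add: broken_line_def joinpaths_def linepath_def)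

lemma homotopic_image_of_paths_with_same_ends:
  fixes P P' :: "real \<Rightarrow> 'a::real_normed_vector"
  assumes q: "continuous_map euclidean Y q" and P: "path P" "path P'"
    and ends: "P' 0 = P 0" "P' 1 = P 1"
  shows "homotopic_with (\<lambda>h. h 0 = q (P 0) \<and> h 1 = q (P 1)) (top_of_set {0..1}) Y (q \<circ> P) (q \<circ> P')"
proof -
  define G where "G x = (1 - fst x) *\<^sub>R P (snd x) + fst x *\<^sub>R P' (snd x)" for x :: "real \<times> real"
  have "continuous_on ({0..1} \<times> {0..1}) G"
    unfolding G_def
  proof (intro continuous_intros)
    show "continuous_on ({0..1} \<times> {0..1}) (\<lambda>x. P (snd x))"
      by (rule continuous_on_compose2[OF P(1)[unfolded path_def]]) (auto intro: continuous_intros)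
    show "continuous_on ({0..1} \<times> {0..1}) (\<lambda>x. P' (snd x))"
      by (rule continuous_on_compose2[OF P(2)[unfolded path_def]]) (auto intro: continuous_intros)
  qed
  from continuous_map_unit_square[OF this, of UNIV]
  have "continuous_map (prod_topology (top_of_set {0..1}) (top_of_set {0..1})) Y (q \<circ> G)"
    by (intro continuous_map_compose[OF _ q]) simp
  then show ?thesis
    by (rule homotopic_with_from_unit_square) (simp_all add: G_def ends scaleR_left_diff_distrib)
qed

text \<open>The loop runs out along a segment and, in the image, back along the same segment; shrinking
  the segment to its initial point contracts the loop.\<close>

lemma null_homotopic_image_of_fold:
  fixes p b p' :: "'a::real_normed_vector"
  assumes q: "continuous_map euclidean Y q" and fold: "\<And>s. q (linepath b p' s) = q (linepath b p s)"
  shows "homotopic_with (\<lambda>g. g 0 = q p \<and> g 1 = q p) (top_of_set {0..1}) Y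
           (q \<circ> (linepath p b +++ linepath b p')) (\<lambda>t. q p)"
proof -
  define w where "w t = min (2 * t) (2 - 2 * t)" for t :: real
  define N where "N x = q (linepath p b ((1 - fst x) * w (snd x)))" for x :: "real \<times> real"
  have "continuous_on ({0..1} \<times> {0..1}) (\<lambda>x::real \<times> real. linepath p b ((1 - fst x) * w (snd x)))"
    unfolding linepath_def w_def by (intro continuous_intros)
  from continuous_map_unit_square[OF this, of UNIV]
  have "continuous_map (prod_topology (top_of_set {0..1}) (top_of_set {0..1})) Y N"
    unfolding N_def by (auto intro: continuous_map_compose[OF _ q, unfolded o_def])
  moreover have "N (0, t) = (q \<circ> (linepath p b +++ linepath b p')) t" for t
  proof (cases "t \<le> 1/2")
    case True
    then show ?thesis
      by (simp add: N_def w_def joinpaths_def)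
  next
    case False
    have "linepath p b (2 - 2 * t) = linepath b p (2 * t - 1)"
      using fun_cong[OF reversepath_linepath[of p b], of "2 * t - 1"] by (simp add: reversepath_def)
    with False fold[of "2 * t - 1"] show ?thesis
      by (simp add: N_def w_def joinpaths_def)
  qed
  moreover have "N (1, t) = q p" for t
    by (simp add: N_def linepath_def)
  moreover have "N (s, 0) = q p \<and> N (s, 1) = q p" for s
    by (simp add: N_def w_def linepath_def)
  ultimately show ?thesis
    by (rule homotopic_with_from_unit_square)
qed

section \<open>Quotients of a vector space by affine deck maps\<close>

text \<open>Near every
  point \<open>f\<close> only elements of \<open>D\<close> fixing \<open>f\<close> identify points, so \<open>q\<close> is locally a cone over \<open>q f\<close>;
  and every element of \<open>D\<close> is a product of two elements with fixed points, which is what makes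
  the quotient simply connected.\<close>

locale deck_quotient =
  fixes X :: "'b topology" and q :: "'a::real_normed_vector \<Rightarrow> 'b" and D :: "('a \<Rightarrow> 'a) set"
  assumes continuous_map_q: "continuous_map euclidean X q"
    and openin_q_image: "open V \<Longrightarrow> openin X (q ` V)"
    and topspace_eq_range: "topspace X = range q"
    and q_eq_iff: "q a = q b \<longleftrightarrow> (\<exists>h\<in>D. h a = b)"
    and id_in_deck: "id \<in> D"
    and comp_in_deck: "\<lbrakk>h \<in> D; h' \<in> D\<rbrakk> \<Longrightarrow> h \<circ> h' \<in> D"
    and deck_linepath: "h \<in> D \<Longrightarrow> h (linepath a b s) = linepath (h a) (h b) s"
    and deck_continuous: "h \<in> D \<Longrightarrow> continuous_on UNIV h"
    and deck_locally_fixing: "\<exists>e>0. \<forall>h\<in>D. \<forall>p\<in>ball f e. h p \<in> ball f e \<longrightarrow> h f = f"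
    and deck_factors_fixing: "h \<in> D \<Longrightarrow> \<exists>h1\<in>D. \<exists>h2\<in>D. h = h1 \<circ> h2 \<and> (\<exists>a. h1 a = a) \<and> (\<exists>b. h2 b = b)"
begin

lemma q_deck: "h \<in> D \<Longrightarrow> q (h p) = q p"
  using q_eq_iff by metis

lemma path_connected_space: "path_connected_space X"
proof -
  have "path_connectedin X (q ` UNIV)"
    by (rule path_connectedin_continuous_map_image[OF continuous_map_q]) simp
  then show ?thesis
    unfolding topspace_eq_range[symmetric] path_connectedin_topspace .
qed

lemma deck_fixing_linepath: "\<lbrakk>h \<in> D; h a = a\<rbrakk> \<Longrightarrow> q (linepath a (h x) s) = q (linepath a x s)"
  by (metis deck_linepath q_deck)

definition radial_chart :: "'a \<Rightarrow> real \<Rightarrow> bool" where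
  "radial_chart f e \<longleftrightarrow> e > 0 \<and>
     (\<forall>p\<in>ball f e. \<forall>p'\<in>ball f e. q p = q p' \<longrightarrow> (\<forall>s. q (linepath p f s) = q (linepath p' f s)))"

lemma exists_radial_chart: "\<exists>e. radial_chart f e"
proof -
  obtain e where e: "e > 0" and fixing: "\<forall>h\<in>D. \<forall>p\<in>ball f e. h p \<in> ball f e \<longrightarrow> h f = f"
    using deck_locally_fixing by blast
  have "q (linepath p f s) = q (linepath p' f s)"
    if in_ball: "p \<in> ball f e" "p' \<in> ball f e" and same: "q p = q p'" for p p' s
  proof -
    obtain h where h: "h \<in> D" "h p = p'"
      using same q_eq_iff by blast
    then have "h f = f"
      using fixing in_ball by blast
    then have "h (linepath p f s) = linepath p' f s"
      using deck_linepath[OF h(1), of p f s] h(2) by simp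
    then show ?thesis
      using q_deck[OF h(1)] by metis
  qed
  then show ?thesis
    unfolding radial_chart_def using e by blast
qed

text \<open>By \<open>radial_chart f e\<close> the choice of representative does not matter for \<open>u \<in> q ` ball f e\<close>;
  other values of \<open>u\<close> are never used.\<close>

definition radial_contraction :: "'a \<Rightarrow> real \<Rightarrow> 'b \<Rightarrow> real \<Rightarrow> 'b" where
  "radial_contraction f e u s = q (linepath (SOME p. p \<in> ball f e \<and> q p = u) f s)"

lemma radial_contraction_q:
  assumes "radial_chart f e" and "p \<in> ball f e"
  shows "radial_contraction f e (q p) s = q (linepath p f s)"
proof -
  define p' where "p' = (SOME p'. p' \<in> ball f e \<and> q p' = q p)"
  have "p' \<in> ball f e \<and> q p' = q p"
    unfolding p'_def by (rule someI[of _ p]) (use assms(2) in simp)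
  then have "q (linepath p' f s) = q (linepath p f s)"
    using assms unfolding radial_chart_def by blast
  then show ?thesis
    unfolding radial_contraction_def p'_def by simp
qed

lemma continuous_map_radial_contraction:
  assumes chart: "radial_chart f e"
  shows "continuous_map (prod_topology (subtopology X (q ` ball f e)) euclideanreal) X
           (\<lambda>(u, s). radial_contraction f e u s)"
  unfolding continuous_map_def
proof (intro conjI allI impI)
  let ?Z = "prod_topology (subtopology X (q ` ball f e)) euclideanreal"
  have topspace_Z: "topspace ?Z = q ` ball f e \<times> UNIV"
    by (auto simp: topspace_eq_range)
  show "(\<lambda>(u, s). radial_contraction f e u s) \<in> topspace ?Z \<rightarrow> topspace X"
    by (auto simp: topspace_eq_range radial_contraction_def)
  fix W assume "openin X W"
  then have "open (q -` W)"
    using continuous_map_q by (simp add: continuous_map_def vimage_def)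
  moreover have "continuous_on UNIV (\<lambda>x::'a \<times> real. linepath (fst x) f (snd x))"
    unfolding linepath_def by (intro continuous_intros)
  ultimately have "open ((\<lambda>x. linepath (fst x) f (snd x)) -` q -` W)"
    by (rule open_vimage)
  then have open_O: "open ((\<lambda>x. linepath (fst x) f (snd x)) -` q -` W \<inter> (ball f e \<times> UNIV))"
    by (intro open_Int open_Times) auto
  show "openin ?Z {x \<in> topspace ?Z. (\<lambda>(u, s). radial_contraction f e u s) x \<in> W}"
  proof (subst openin_subopen, intro ballI)
    fix x assume "x \<in> {x \<in> topspace ?Z. (\<lambda>(u, s). radial_contraction f e u s) x \<in> W}"
    then obtain p s where x: "x = (q p, s)" and p: "p \<in> ball f e" and in_W: "radial_contraction f e (q p) s \<in> W"
      using topspace_Z by auto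
    then have "(p, s) \<in> (\<lambda>x. linepath (fst x) f (snd x)) -` q -` W \<inter> (ball f e \<times> UNIV)"
      using radial_contraction_q[OF chart p] by simp
    then obtain V1 V2 where V: "open V1" "open V2" "(p, s) \<in> V1 \<times> V2"
      and V_sub: "V1 \<times> V2 \<subseteq> (\<lambda>x. linepath (fst x) f (snd x)) -` q -` W \<inter> (ball f e \<times> UNIV)"
      by (rule open_prod_elim[OF open_O])
    have V1_ball: "V1 \<subseteq> ball f e"
      using V(3) V_sub by auto
    have "openin (subtopology X (q ` ball f e)) (q ` V1)"
      unfolding openin_subtopology using openin_q_image[OF V(1)] V1_ball by blast
    then have "openin ?Z (q ` V1 \<times> V2)"
      unfolding openin_prod_Times_iff using V(2) by auto
    moreover have "q ` V1 \<times> V2 \<subseteq> {x \<in> topspace ?Z. (\<lambda>(u, s). radial_contraction f e u s) x \<in> W}"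
    proof
      fix y assume "y \<in> q ` V1 \<times> V2"
      then obtain v t where y: "y = (q v, t)" "v \<in> V1" "t \<in> V2"
        by auto
      then have "q (linepath v f t) \<in> W"
        using V_sub by auto
      then show "y \<in> {x \<in> topspace ?Z. (\<lambda>(u, s). radial_contraction f e u s) x \<in> W}"
        using y V1_ball radial_contraction_q[OF chart] topspace_Z by auto
    qed
    ultimately show "\<exists>T. openin ?Z T \<and> x \<in> T \<and> T \<subseteq> {x \<in> topspace ?Z. (\<lambda>(u, s). radial_contraction f e u s) x \<in> W}"
      using V(3) x by blast
  qed
qed

lemma continuous_map_radial_contraction_path:
  assumes chart: "radial_chart f e" and c: "pathin X c" and c_chart: "c ` {0..1} \<subseteq> q ` ball f e"
    and \<sigma>: "continuous_map Z (top_of_set {0..1}) \<sigma>" and \<tau>: "continuous_map Z euclideanreal \<tau>"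
  shows "continuous_map Z X (\<lambda>z. radial_contraction f e (c (\<sigma> z)) (\<tau> z))"
proof -
  have "continuous_map Z (subtopology X (q ` ball f e)) (c \<circ> \<sigma>)"
    using c c_chart continuous_map_image_subset_topspace[OF \<sigma>] unfolding pathin_def
    by (intro continuous_map_into_subtopology continuous_map_compose[OF \<sigma>]) auto
  from continuous_map_compose[OF continuous_map_pairedI[OF this \<tau>] continuous_map_radial_contraction[OF chart]]
  show ?thesis
    by (simp add: o_def)
qed

text \<open>At \<open>s = 1\<close> the path \<open>c\<close> is squeezed into \<open>[1/2, 3/4]\<close>, where it is contracted to \<open>q f\<close>;
  on the outer quarters the contractions of its two endpoints are traced.\<close>

lemma homotopic_to_broken_line:
  assumes chart: "radial_chart f e" and c: "pathin X c" and c_chart: "c ` {0..1} \<subseteq> q ` ball f e"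
    and a: "a \<in> ball f e" "q a = c 0" and b: "b \<in> ball f e" "q b = c 1"
  shows "homotopic_with (\<lambda>h. h 0 = c 0 \<and> h 1 = c 1) (top_of_set {0..1}) X c (q \<circ> broken_line a f b)"
proof -
  let ?X = "prod_topology (top_of_set {0..1::real}) (top_of_set {0..1::real})"
  define \<sigma> where "\<sigma> x = max 0 (min 1 (snd x + fst x * (3 * snd x - 2)))" for x :: "real \<times> real"
  define \<psi> where "\<psi> t = min 1 (min (2 * t) (4 - 4 * t))" for t :: real
  define H where "H = (\<lambda>x. radial_contraction f e (c (\<sigma> x)) (fst x * \<psi> (snd x)))"
  have \<sigma>_01: "\<sigma> x \<in> {0..1}" for x
    unfolding \<sigma>_def by auto
  have "continuous_map ?X (top_of_set {0..1}) \<sigma>"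
    by (rule continuous_map_unit_square) (auto simp: \<sigma>_def intro!: continuous_intros)
  moreover have "continuous_map ?X euclideanreal (\<lambda>x. fst x * \<psi> (snd x))"
    using continuous_map_unit_square[of "\<lambda>x. fst x * \<psi> (snd x)" UNIV]
    by (simp add: \<psi>_def continuous_intros)
  ultimately have "continuous_map ?X X H"
    unfolding H_def by (rule continuous_map_radial_contraction_path[OF chart c c_chart])
  moreover have "H (0, t) = c t" if t: "t \<in> {0..1}" for t
  proof -
    have "c t \<in> q ` ball f e"
      using c_chart t by blast
    then obtain p where "p \<in> ball f e" "c t = q p"
      by blast
    moreover have "\<sigma> (0, t) = t"
      using t by (simp add: \<sigma>_def)
    ultimately show ?thesis
      using radial_contraction_q[OF chart] by (simp add: H_def linepath_def)
  qed
  moreover have "H (1, t) = (q \<circ> broken_line a f b) t" if t: "t \<in> {0..1}" for t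
  proof -
    consider "t \<le> 1/2" | "1/2 < t" "t \<le> 3/4" | "3/4 < t" by linarith
    then show ?thesis
    proof cases
      case 1
      then have "\<sigma> (1, t) = 0" "\<psi> t = 2 * t"
        using t by (auto simp: \<sigma>_def \<psi>_def)
      with 1 show ?thesis
        using radial_contraction_q[OF chart a(1)] a(2)
        by (simp add: H_def broken_line_def joinpaths_def)
    next
      case 2
      have "c (\<sigma> (1, t)) \<in> q ` ball f e"
        using c_chart \<sigma>_01 by blast
      then obtain p where "p \<in> ball f e" "c (\<sigma> (1, t)) = q p"
        by blast
      moreover have "\<psi> t = 1"
        using 2 by (auto simp: \<psi>_def)
      ultimately show ?thesis
        using 2 radial_contraction_q[OF chart] by (simp add: H_def broken_line_def joinpaths_def linepath_def)
    next
      case 3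
      then have "\<sigma> (1, t) = 1" "\<psi> t = 4 - 4 * t"
        using t by (auto simp: \<sigma>_def \<psi>_def)
      moreover have "linepath b f (4 - 4 * t) = linepath f b (4 * t - 3)"
        using fun_cong[OF reversepath_linepath[of b f], of "4 * t - 3"] by (simp add: reversepath_def)
      moreover have "broken_line a f b t = linepath f b (4 * t - 3)"
        using 3 by (simp add: broken_line_def joinpaths_def algebra_simps)
      ultimately show ?thesis
        using radial_contraction_q[OF chart b(1)] b(2) by (simp add: H_def)
    qed
  qed
  moreover have "H (s, 0) = c 0 \<and> H (s, 1) = c 1" if "s \<in> {0..1}" for s
  proof -
    have "\<sigma> (s, 0) = 0" "\<sigma> (s, 1) = 1" "\<psi> 0 = 0" "\<psi> 1 = 0"
      using that by (auto simp: \<sigma>_def \<psi>_def)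
    then show ?thesis
      using radial_contraction_q[OF chart a(1)] radial_contraction_q[OF chart b(1)] a(2) b(2)
      by (simp add: H_def linepath_def)
  qed
  ultimately show ?thesis
    by (rule homotopic_with_from_unit_square)
qed

lemma null_homotopic_image_of_fixing_fold:
  assumes "h \<in> D" and "h a = a"
  shows "homotopic_with (\<lambda>g. g 0 = q x \<and> g 1 = q x) (top_of_set {0..1}) X
           (q \<circ> (linepath x a +++ linepath a (h x))) (\<lambda>t. q x)"
  using continuous_map_q deck_fixing_linepath[OF assms] by (rule null_homotopic_image_of_fold)

lemma null_homotopic_image_of_path:
  assumes P: "path P" and loop: "q (P 1) = q (P 0)"
  shows "homotopic_with (\<lambda>g. g 0 = q (P 0) \<and> g 1 = q (P 0)) (top_of_set {0..1}) X (q \<circ> P) (\<lambda>t. q (P 0))"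
proof -
  obtain h where "h \<in> D" "h (P 0) = P 1"
    using loop q_eq_iff by metis
  then obtain h1 h2 a b where h1: "h1 \<in> D" "h1 a = a" and h2: "h2 \<in> D" "h2 b = b"
    and P1: "P 1 = h1 (h2 (P 0))"
    using deck_factors_fixing by (metis comp_apply)
  define F where "F i = (if i = 0 then linepath (P 0) b +++ linepath b (h2 (P 0))
    else linepath (h2 (P 0)) a +++ linepath a (P 1))" for i :: nat
  have F_ends: "F 0 0 = P 0" "F 0 1 = h2 (P 0)" "F 1 0 = h2 (P 0)" "F 1 1 = P 1"
    by (simp_all add: F_def joinpaths_def linepath_def)
  have q_h2: "q (h2 (P 0)) = q (P 0)"
    using q_deck[OF h2(1)] .
  have F_ends_q: "(q \<circ> F i) 0 = q (P 0) \<and> (q \<circ> F i) 1 = q (P 0)" if "i < 2" for i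
  proof -
    have "i = 0 \<or> i = 1"
      using that by linarith
    then show ?thesis
      using F_ends q_h2 loop by auto
  qed
  have pieces: "homotopic_with (\<lambda>g. g 0 = q (P 0) \<and> g 1 = q (P 0)) (top_of_set {0..1}) X
      (q \<circ> F i) (\<lambda>t. q (P 0))" if "i < 2" for i
  proof (cases "i = 0")
    case True
    then show ?thesis
      using null_homotopic_image_of_fixing_fold[OF h2, of "P 0"] by (simp add: F_def)
  next
    case False
    with that have "i = 1"
      by simp
    then show ?thesis
      using null_homotopic_image_of_fixing_fold[OF h1, of "h2 (P 0)"] q_h2 P1 by (simp add: F_def)
  qed
  have "pathin euclidean (concat_paths 2 F)"
    using F_ends by (intro pathin_concat_paths) (auto simp: F_def pathin_canon_iff[of UNIV, simplified])
  then have "homotopic_with (\<lambda>g. g 0 = q (P 0) \<and> g 1 = q (P 1)) (top_of_set {0..1}) X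
      (q \<circ> P) (q \<circ> concat_paths 2 F)"
    using F_ends concat_paths_0[of 2 F] concat_paths_1[of 2 F]
    by (intro homotopic_image_of_paths_with_same_ends[OF continuous_map_q P])
      (simp_all add: pathin_canon_iff[of UNIV, simplified])
  moreover have "homotopic_with (\<lambda>g. g 0 = (q \<circ> F 0) 0 \<and> g 1 = (q \<circ> F (2 - 1)) 1) (top_of_set {0..1}) X
      (concat_paths 2 (\<lambda>i. q \<circ> F i)) (concat_paths 2 (\<lambda>i t. q (P 0)))"
  proof (rule homotopic_with_concat_paths)
    show "homotopic_with (\<lambda>g. g 0 = (q \<circ> F i) 0 \<and> g 1 = (q \<circ> F i) 1) (top_of_set {0..1}) X
        (q \<circ> F i) (\<lambda>t. q (P 0))" if "i < 2" for i
      using pieces[OF that] F_ends_q[OF that] by simp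
    show "(q \<circ> F i) 1 = (q \<circ> F (Suc i)) 0" if "Suc i < 2" for i
      using that F_ends by simp
  qed simp
  moreover have "concat_paths 2 (\<lambda>i. q \<circ> F i) = q \<circ> concat_paths 2 F"
    "concat_paths 2 (\<lambda>i t. q (P 0)) = (\<lambda>t. q (P 0))"
    by (simp_all add: fun_eq_iff concat_paths_def)
  ultimately show ?thesis
    using F_ends loop by (simp add: homotopic_with_trans)
qed

lemma deck_chain:
  assumes "\<And>i. Suc i < n \<Longrightarrow> q (a (Suc i)) = q (b i)"
  shows "\<exists>hs. (\<forall>i<n. hs i \<in> D) \<and> (\<forall>i. Suc i < n \<longrightarrow> hs (Suc i) (a (Suc i)) = hs i (b i))"
  using assms
proof (induction n)
  case 0
  show ?case by (rule exI[of _ "\<lambda>_. id"]) simp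
next
  case (Suc n)
  note glue = Suc.prems
  have "\<And>i. Suc i < n \<Longrightarrow> q (a (Suc i)) = q (b i)"
    using glue by simp
  then obtain hs where hs: "\<forall>i<n. hs i \<in> D" "\<forall>i. Suc i < n \<longrightarrow> hs (Suc i) (a (Suc i)) = hs i (b i)"
    using Suc.IH by blast
  show ?case
  proof (cases n)
    case 0
    then show ?thesis
      using id_in_deck by (intro exI[of _ "\<lambda>_. id"]) (simp add: id_def)
  next
    case (Suc m)
    obtain g where g: "g \<in> D" "g (a n) = b m"
      using glue[of m] Suc q_eq_iff by auto
    define hs' where "hs' = hs(n := hs m \<circ> g)"
    have "\<forall>i<Suc n. hs' i \<in> D"
      using hs(1) comp_in_deck[OF _ g(1), of "hs m"] Suc unfolding hs'_def by auto
    moreover have "\<forall>i. Suc i < Suc n \<longrightarrow> hs' (Suc i) (a (Suc i)) = hs' i (b i)"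
      using hs(2) g(2) Suc unfolding hs'_def by auto
    ultimately show ?thesis
      by blast
  qed
qed

lemma pathin_locally_in_radial_chart:
  assumes \<gamma>: "pathin X \<gamma>" and t: "t \<in> {0..1}"
  obtains U f e where "open U" "t \<in> U" "radial_chart f e" "\<gamma> ` (U \<inter> {0..1}) \<subseteq> q ` ball f e"
proof -
  have "\<gamma> t \<in> topspace X"
    using continuous_map_image_subset_topspace[OF \<gamma>[unfolded pathin_def]] t by auto
  then obtain p where p: "\<gamma> t = q p"
    by (auto simp: topspace_eq_range)
  obtain e where chart: "radial_chart p e"
    using exists_radial_chart by blast
  have "openin (top_of_set {0..1}) {x \<in> topspace (top_of_set {0..1}). \<gamma> x \<in> q ` ball p e}"
    by (rule openin_continuous_map_preimage[OF \<gamma>[unfolded pathin_def] openin_q_image[OF open_ball]])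
  then obtain U where U: "open U" "{x \<in> {0..1}. \<gamma> x \<in> q ` ball p e} = {0..1} \<inter> U"
    unfolding openin_open by auto
  have "p \<in> ball p e"
    using chart by (simp add: radial_chart_def)
  then have "t \<in> U"
    using U(2) t p by auto
  moreover have "\<gamma> ` (U \<inter> {0..1}) \<subseteq> q ` ball p e"
    using U(2) by auto
  ultimately show ?thesis
    by (rule that[OF U(1) _ chart])
qed

lemma pathin_subdivision:
  assumes \<gamma>: "pathin X \<gamma>"
  obtains n where "n > 0"
    and "\<And>i. i < n \<Longrightarrow> \<exists>f e. radial_chart f e \<and> (\<lambda>\<tau>. \<gamma> ((real i + \<tau>) / real n)) ` {0..1} \<subseteq> q ` ball f e"
proof -
  define C where "C = {U. open U \<and> (\<exists>f e. radial_chart f e \<and> \<gamma> ` (U \<inter> {0..1}) \<subseteq> q ` ball f e)}"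
  have cover: "\<exists>U\<in>C. t \<in> U" if t: "t \<in> {0..1}" for t
  proof -
    obtain U f e where "open U" "t \<in> U" "radial_chart f e" "\<gamma> ` (U \<inter> {0..1}) \<subseteq> q ` ball f e"
      by (rule pathin_locally_in_radial_chart[OF \<gamma> t])
    then show ?thesis
      unfolding C_def by blast
  qed
  obtain \<delta> where "0 < \<delta>" and \<delta>: "\<And>T. \<lbrakk>T \<subseteq> {0..1}; diameter T < \<delta>\<rbrakk> \<Longrightarrow> \<exists>B\<in>C. T \<subseteq> B"
  proof (rule Lebesgue_number_lemma[of "{0..1}" C])
    show "C \<noteq> {}"
      using cover[of 0] by auto
    show "{0..1} \<subseteq> \<Union>C"
      using cover by blast
  qed (simp_all add: C_def)
  obtain n :: nat where N: "n > 1 / \<delta>"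
    using reals_Archimedean2 by blast
  then have n: "n > 0"
    using \<open>0 < \<delta>\<close> by (metis of_nat_0_less_iff order.strict_trans zero_less_divide_1_iff)
  show ?thesis
  proof (rule that[OF n])
    fix i assume i: "i < n"
    have piece: "(\<lambda>\<tau>. (real i + \<tau>) / real n) ` {0..1} \<subseteq> {real i / n .. (real i + 1) / n}"
      using n by (auto intro!: divide_right_mono)
    have "{real i / n .. (real i + 1) / n} \<subseteq> {0..1}"
      using i by (auto simp: field_split_simps)
    moreover have "diameter {real i / n .. (real i + 1) / n} < \<delta>"
      using \<open>0 < \<delta>\<close> N n by (auto simp: field_split_simps)
    ultimately obtain B where B: "B \<in> C" "{real i / n .. (real i + 1) / n} \<subseteq> B"
      using \<delta> by blast
    then obtain f e where chart: "radial_chart f e" and covered: "\<gamma> ` (B \<inter> {0..1}) \<subseteq> q ` ball f e"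
      unfolding C_def by blast
    have "(\<lambda>\<tau>. (real i + \<tau>) / real n) ` {0..1} \<subseteq> B \<inter> {0..1}"
      using piece B(2) \<open>{real i / n .. (real i + 1) / n} \<subseteq> {0..1}\<close> by blast
    from image_mono[OF this, of \<gamma>]
    have "(\<lambda>\<tau>. \<gamma> ((real i + \<tau>) / real n)) ` {0..1} \<subseteq> \<gamma> ` (B \<inter> {0..1})"
      by (simp add: image_image)
    then show "\<exists>f e. radial_chart f e \<and> (\<lambda>\<tau>. \<gamma> ((real i + \<tau>) / real n)) ` {0..1} \<subseteq> q ` ball f e"
      using chart order_trans[OF _ covered] by blast
  qed
qed

lemma image_of_lifted_broken_lines:
  assumes n: "n > 0" and glue: "\<And>i. Suc i < n \<Longrightarrow> q (a (Suc i)) = q (b i)"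
  obtains L where "path L" and "q \<circ> L = concat_paths n (\<lambda>i. q \<circ> broken_line (a i) (f i) (b i))"
proof -
  obtain hs where hs: "\<forall>i<n. hs i \<in> D" and hs_glue: "\<forall>i. Suc i < n \<longrightarrow> hs (Suc i) (a (Suc i)) = hs i (b i)"
    using deck_chain[of n a b, OF glue] by blast
  define L where "L = concat_paths n (\<lambda>i. hs i \<circ> broken_line (a i) (f i) (b i))"
  have "pathin euclidean L"
    unfolding L_def
  proof (rule pathin_concat_paths[OF n])
    show "pathin euclidean (hs i \<circ> broken_line (a i) (f i) (b i))" if "i < n" for i
      using path_continuous_image[OF path_broken_line continuous_on_subset[OF deck_continuous]] hs that
      by (simp add: pathin_canon_iff[of UNIV, simplified])
    show "(hs i \<circ> broken_line (a i) (f i) (b i)) 1 = (hs (Suc i) \<circ> broken_line (a (Suc i)) (f (Suc i)) (b (Suc i))) 0"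
      if "Suc i < n" for i
      using hs_glue that by simp
  qed
  moreover have "q \<circ> L = concat_paths n (\<lambda>i. q \<circ> broken_line (a i) (f i) (b i))"
    using q_deck hs piece_index_less[OF n] by (simp add: fun_eq_iff L_def concat_paths_def)
  ultimately show ?thesis
    using that by (simp add: pathin_canon_iff[of UNIV, simplified])
qed

lemma homotopic_to_image_of_path:
  assumes \<gamma>: "pathin X \<gamma>"
  obtains L where "path L" and "homotopic_with (\<lambda>g. g 0 = \<gamma> 0 \<and> g 1 = \<gamma> 1) (top_of_set {0..1}) X \<gamma> (q \<circ> L)"
proof -
  obtain n where n: "n > 0" and pieces:
    "\<And>i. i < n \<Longrightarrow> \<exists>f e. radial_chart f e \<and> (\<lambda>\<tau>. \<gamma> ((real i + \<tau>) / real n)) ` {0..1} \<subseteq> q ` ball f e"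
    using pathin_subdivision[OF \<gamma>] by blast
  define c where "c = (\<lambda>i \<tau>. \<gamma> ((real i + \<tau>) / real n))"
  have c_agree: "c i 1 = c (Suc i) 0" for i
    by (simp add: c_def add.commute)
  have "\<forall>i\<in>{..<n}. \<exists>f e a b. radial_chart f e \<and> c i ` {0..1} \<subseteq> q ` ball f e \<and>
      a \<in> ball f e \<and> q a = c i 0 \<and> b \<in> ball f e \<and> q b = c i 1"
  proof
    fix i assume "i \<in> {..<n}"
    then obtain f e where "radial_chart f e" and covered: "c i ` {0..1} \<subseteq> q ` ball f e"
      using pieces unfolding c_def by blast
    moreover have "c i 0 \<in> q ` ball f e" "c i 1 \<in> q ` ball f e"
      using covered by auto
    then obtain a b where "a \<in> ball f e" "q a = c i 0" "b \<in> ball f e" "q b = c i 1"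
      by (metis imageE)
    ultimately show "\<exists>f e a b. radial_chart f e \<and> c i ` {0..1} \<subseteq> q ` ball f e \<and>
        a \<in> ball f e \<and> q a = c i 0 \<and> b \<in> ball f e \<and> q b = c i 1"
      by blast
  qed
  then obtain f e a b where data: "\<forall>i\<in>{..<n}. radial_chart (f i) (e i) \<and>
      c i ` {0..1} \<subseteq> q ` ball (f i) (e i) \<and> a i \<in> ball (f i) (e i) \<and> q (a i) = c i 0 \<and>
      b i \<in> ball (f i) (e i) \<and> q (b i) = c i 1"
    unfolding bchoice_iff by blast
  have hom: "homotopic_with (\<lambda>g. g 0 = c 0 0 \<and> g 1 = c (n - 1) 1) (top_of_set {0..1}) X
      (concat_paths n c) (concat_paths n (\<lambda>i. q \<circ> broken_line (a i) (f i) (b i)))"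
  proof (rule homotopic_with_concat_paths[OF n])
    show "homotopic_with (\<lambda>g. g 0 = c i 0 \<and> g 1 = c i 1) (top_of_set {0..1}) X
        (c i) (q \<circ> broken_line (a i) (f i) (b i))" if "i < n" for i
      using data that pathin_subpath_piece[OF \<gamma> that]
      by (intro homotopic_to_broken_line[where e = "e i"]) (auto simp: c_def)
    show "c i 1 = c (Suc i) 0" for i
      by (rule c_agree)
  qed
  obtain L where L: "path L" and qL: "q \<circ> L = concat_paths n (\<lambda>i. q \<circ> broken_line (a i) (f i) (b i))"
  proof (rule image_of_lifted_broken_lines[OF n])
    show "q (a (Suc i)) = q (b i)" if "Suc i < n" for i
      using data that c_agree[of i] by simp
  qed
  have "concat_paths n c = \<gamma>"
    unfolding c_def by (intro ext concat_paths_subpaths[OF n])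
  moreover have "c 0 0 = \<gamma> 0" "c (n - 1) 1 = \<gamma> 1"
    using n by (simp_all add: c_def)
  ultimately show ?thesis
    using that[OF L] hom unfolding qL[symmetric] by simp
qed

theorem simply_connected: "simply_connected_space X"
  unfolding simply_connected_space_def
proof (intro conjI allI impI)
  show "path_connected_space X"
    by (rule path_connected_space)
  fix \<gamma> assume "pathin X \<gamma> \<and> \<gamma> 1 = \<gamma> 0"
  then have \<gamma>: "pathin X \<gamma>" and loop: "\<gamma> 1 = \<gamma> 0"
    by auto
  obtain L where L: "path L"
    and hom: "homotopic_with (\<lambda>h. h 0 = \<gamma> 0 \<and> h 1 = \<gamma> 1) (top_of_set {0..1}) X \<gamma> (q \<circ> L)"
    using homotopic_to_image_of_path[OF \<gamma>] by blast
  have "q (L 0) = \<gamma> 0" "q (L 1) = \<gamma> 0"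
    using homotopic_with_imp_property[OF hom] loop by auto
  then have "homotopic_with (\<lambda>h. h 0 = \<gamma> 0 \<and> h 1 = \<gamma> 0) (top_of_set {0..1}) X (q \<circ> L) (\<lambda>t. \<gamma> 0)"
    using null_homotopic_image_of_path[OF L] by simp
  with hom[unfolded loop] show "homotopic_with (\<lambda>h. h 0 = \<gamma> 0 \<and> h 1 = \<gamma> 0) (top_of_set {0..1}) X \<gamma> (\<lambda>t. \<gamma> 0)"
    by (rule homotopic_with_trans)
qed

end

section \<open>The lattice and the rotation\<close>

lemma pt_cases: obtains a b c d e f g h where "(p::pt) = (a, b, c, d, e, f, g, h)"
  by (metis prod.exhaust)

lemma rho_rho_rho: "rho (rho (rho p)) = p"
  by (cases p rule: pt_cases) simp

lemma mul_zero_left: "mul 0 p = p"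
  by (cases p rule: pt_cases) (simp add: zero_prod_def)

lemma mul_assoc: "mul g (mul h p) = mul (mul g h) p"
  by (cases g rule: pt_cases; cases h rule: pt_cases; cases p rule: pt_cases) (simp add: algebra_simps)

lemma rho_mul: "rho (mul g p) = mul (rho g) (rho p)"
  by (cases g rule: pt_cases; cases p rule: pt_cases) (simp add: algebra_simps)

lemma funpow_rho_mul: "(rho ^^ k) (mul g p) = mul ((rho ^^ k) g) ((rho ^^ k) p)"
  by (induction k) (simp_all add: rho_mul)

lemma funpow_rho_mod: "(rho ^^ k) p = (rho ^^ (k mod 3)) p"
proof -
  have "(rho ^^ (3 * m)) p = p" for m
    by (induction m) (simp_all add: funpow_add numeral_3_eq_3 rho_rho_rho)
  then have "(rho ^^ (k mod 3 + 3 * (k div 3))) p = (rho ^^ (k mod 3)) p"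
    by (simp only: funpow_add comp_apply)
  then show ?thesis
    by simp
qed

definition inv_pt :: "pt \<Rightarrow> pt" where
  "inv_pt g = (case g of (x1, x2, y1, y2, z1, z2, v1, v2) \<Rightarrow>
     (- x1, - x2, - y1, - y2, - z1, - z2, - v1 + (y1 - y2) * z1 - (y1 + 2 * y2) * z2,
      - v2 - (2 * y1 + y2) * z1 + (y2 - y1) * z2))"

lemma mul_inv_pt_left: "mul (inv_pt g) (mul g p) = p"
  by (cases g rule: pt_cases; cases p rule: pt_cases) (simp add: inv_pt_def algebra_simps)

lemma Lambda_iff_Ints:
  "(x1, x2, y1, y2, z1, z2, v1, v2) \<in> Lambda \<longleftrightarrow>
     x1 \<in> \<int> \<and> x2 \<in> \<int> \<and> y1 \<in> \<int> \<and> y2 \<in> \<int> \<and> z1 \<in> \<int> \<and> z2 \<in> \<int> \<and> v1 \<in> \<int> \<and> v2 \<in> \<int> \<and> (v1 - v2) / 3 \<in> \<int>"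
proof
  assume "(x1, x2, y1, y2, z1, z2, v1, v2) \<in> Lambda"
  then obtain a b :: int where "v1 = of_int a" "v2 = of_int b" "a mod 3 = b mod 3"
    and "x1 \<in> \<int>" "x2 \<in> \<int>" "y1 \<in> \<int>" "y2 \<in> \<int>" "z1 \<in> \<int>" "z2 \<in> \<int>"
    unfolding Lambda_def by auto
  moreover from this obtain k where "a - b = 3 * k"
    by (metis dvd_def mod_eq_dvd_iff)
  then have "(v1 - v2) / 3 = of_int k"
    using \<open>v1 = of_int a\<close> \<open>v2 = of_int b\<close> by (simp add: field_simps flip: of_int_diff)
  ultimately show "x1 \<in> \<int> \<and> x2 \<in> \<int> \<and> y1 \<in> \<int> \<and> y2 \<in> \<int> \<and> z1 \<in> \<int> \<and> z2 \<in> \<int> \<and> v1 \<in> \<int> \<and> v2 \<in> \<int> \<and> (v1 - v2) / 3 \<in> \<int>"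
    by auto
next
  assume ints: "x1 \<in> \<int> \<and> x2 \<in> \<int> \<and> y1 \<in> \<int> \<and> y2 \<in> \<int> \<and> z1 \<in> \<int> \<and> z2 \<in> \<int> \<and> v1 \<in> \<int> \<and> v2 \<in> \<int> \<and> (v1 - v2) / 3 \<in> \<int>"
  then obtain a b k :: int where ab: "v1 = of_int a" "v2 = of_int b" "(v1 - v2) / 3 = of_int k"
    by (metis Ints_cases)
  then have "a - b = 3 * k"
    by (simp add: field_simps flip: of_int_diff of_int_mult of_int_eq_iff)
  then have "a mod 3 = b mod 3"
    by (metis mod_eq_dvd_iff dvd_triv_left)
  with ints ab show "(x1, x2, y1, y2, z1, z2, v1, v2) \<in> Lambda"
    unfolding Lambda_def by (auto elim!: Ints_cases)
qed

lemma zero_in_Lambda: "0 \<in> Lambda"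
  by (simp add: zero_prod_def Lambda_iff_Ints)

lemma mul_in_Lambda:
  assumes "g \<in> Lambda" and "h \<in> Lambda"
  shows "mul g h \<in> Lambda"
proof (cases g rule: pt_cases, cases h rule: pt_cases)
  fix g1 g2 g3 g4 g5 g6 g7 g8 h1 h2 h3 h4 h5 h6 h7 h8 :: real
  assume g: "g = (g1, g2, g3, g4, g5, g6, g7, g8)" and h: "h = (h1, h2, h3, h4, h5, h6, h7, h8)"
  note ints = assms[unfolded g h Lambda_iff_Ints]
  from ints have "(g7 - g8) / 3 + (h7 - h8) / 3 + g3 * h5 - g4 * h6 \<in> \<int>"
    by (intro Ints_add Ints_diff Ints_mult) auto
  also have "(g7 - g8) / 3 + (h7 - h8) / 3 + g3 * h5 - g4 * h6 =
      ((h7 + g7 + (g3 - g4) * h5 - (g3 + 2 * g4) * h6) - (h8 + g8 - (2 * g3 + g4) * h5 + (g4 - g3) * h6)) / 3"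
    by (simp add: field_simps)
  finally show ?thesis
    using ints unfolding g h mul.simps Lambda_iff_Ints by (auto intro!: Ints_add Ints_diff Ints_mult)
qed

lemma inv_pt_in_Lambda:
  assumes "g \<in> Lambda"
  shows "inv_pt g \<in> Lambda"
proof (cases g rule: pt_cases)
  fix g1 g2 g3 g4 g5 g6 g7 g8 :: real
  assume g: "g = (g1, g2, g3, g4, g5, g6, g7, g8)"
  note ints = assms[unfolded g Lambda_iff_Ints]
  from ints have "- ((g7 - g8) / 3) + g3 * g5 - g4 * g6 \<in> \<int>"
    by (intro Ints_add Ints_diff Ints_mult Ints_minus) auto
  also have "- ((g7 - g8) / 3) + g3 * g5 - g4 * g6 =
      ((- g7 + (g3 - g4) * g5 - (g3 + 2 * g4) * g6) - (- g8 - (2 * g3 + g4) * g5 + (g4 - g3) * g6)) / 3"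
    by (simp add: field_simps)
  finally show ?thesis
    using ints unfolding g inv_pt_def prod.case Lambda_iff_Ints by (auto intro!: Ints_add Ints_diff Ints_mult)
qed

lemma rho_in_Lambda:
  assumes "g \<in> Lambda"
  shows "rho g \<in> Lambda"
proof (cases g rule: pt_cases)
  fix g1 g2 g3 g4 g5 g6 g7 g8 :: real
  assume g: "g = (g1, g2, g3, g4, g5, g6, g7, g8)"
  note ints = assms[unfolded g Lambda_iff_Ints]
  from ints have "(g7 - g8) / 3 - g7 \<in> \<int>"
    by (intro Ints_diff) auto
  also have "(g7 - g8) / 3 - g7 = ((- g7 - g8) - g7) / 3"
    by (simp add: field_simps)
  finally show ?thesis
    using ints unfolding g rho.simps Lambda_iff_Ints by (auto intro!: Ints_add Ints_diff)
qed

lemma funpow_rho_in_Lambda: "g \<in> Lambda \<Longrightarrow> (rho ^^ k) g \<in> Lambda"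
  by (induction k) (simp_all add: rho_in_Lambda)

section \<open>The quotients \<open>M\<close> and \<open>M/\<int>\<^sub>3\<close>\<close>

definition M_class :: "pt \<Rightarrow> pt set" where
  "M_class p = M_rel `` {p}"

definition Mhat_class :: "pt \<Rightarrow> pt set set" where
  "Mhat_class p = Z3_rel `` {M_class p}"

lemma M_rel_iff: "(p, p') \<in> M_rel \<longleftrightarrow> (\<exists>g\<in>Lambda. p' = mul g p)"
  unfolding M_rel_def by blast

lemma equiv_M_rel: "equiv UNIV M_rel"
proof (rule equivI)
  show "refl_on UNIV M_rel"
    unfolding refl_on_def M_rel_iff using zero_in_Lambda mul_zero_left by metis
  show "sym M_rel"
    unfolding sym_def M_rel_iff using inv_pt_in_Lambda mul_inv_pt_left by metis
  show "trans M_rel"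
    unfolding trans_def M_rel_iff using mul_in_Lambda mul_assoc by metis
qed auto

lemma topspace_M_top: "topspace M_top = range M_class"
  unfolding M_top_def topspace_quotient_topology[of euclidean, simplified, OF equiv_M_rel] quotient_def M_class_def
  by blast

lemma M_class_eq_iff: "M_class p = M_class p' \<longleftrightarrow> (\<exists>g\<in>Lambda. p' = mul g p)"
  unfolding M_class_def eq_equiv_class_iff[OF equiv_M_rel UNIV_I UNIV_I] M_rel_iff ..

lemma rho_M_M_class: "rho_M (M_class p) = M_class (rho p)"
proof -
  have same: "M_class (rho p') = M_class (rho p)" if p': "p' \<in> M_class p" for p'
  proof -
    obtain g where "g \<in> Lambda" "p' = mul g p"
      using p' unfolding M_class_def Image_singleton_iff M_rel_iff by blast
    then have "M_class (rho p) = M_class (rho p')"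
      unfolding M_class_eq_iff by (auto simp: rho_mul intro!: bexI[of _ "rho g"] rho_in_Lambda)
    then show ?thesis
      by simp
  qed
  have "rho_M (M_class p) = (\<Union>p'\<in>M_class p. M_class (rho p'))"
    unfolding rho_M_def M_class_def by blast
  also have "\<dots> = (\<Union>p'\<in>M_class p. M_class (rho p))"
    using same by (rule SUP_cong[OF refl])
  also have "\<dots> = M_class (rho p)"
    using equiv_class_self[OF equiv_M_rel, of p] by (auto simp: M_class_def)
  finally show ?thesis .
qed

lemma funpow_rho_M_M_class: "(rho_M ^^ k) (M_class p) = M_class ((rho ^^ k) p)"
  by (induction k) (simp_all add: rho_M_M_class)

lemma equiv_Z3_rel: "equiv (topspace M_top) Z3_rel"
  unfolding Z3_rel_def
proof (rule equiv_funpow_orbits)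
  show "rho_M ` topspace M_top \<subseteq> topspace M_top"
    by (auto simp: topspace_M_top rho_M_M_class)
  show "(rho_M ^^ 3) c = c" if "c \<in> topspace M_top" for c
    using that funpow_rho_M_M_class[of 3] funpow_rho_mod[of 3] by (auto simp: topspace_M_top)
qed simp

lemma Mhat_class_eq_iff: "Mhat_class p = Mhat_class p' \<longleftrightarrow> (\<exists>g\<in>Lambda. \<exists>k<3. p' = mul g ((rho ^^ k) p))"
proof -
  have "Mhat_class p = Mhat_class p' \<longleftrightarrow> (M_class p, M_class p') \<in> Z3_rel"
    unfolding Mhat_class_def by (rule eq_equiv_class_iff[OF equiv_Z3_rel]) (simp_all add: topspace_M_top)
  also have "\<dots> \<longleftrightarrow> (\<exists>k<3. M_class p' = (rho_M ^^ k) (M_class p))"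
    unfolding Z3_rel_def topspace_M_top by blast
  also have "\<dots> \<longleftrightarrow> (\<exists>k<3. M_class ((rho ^^ k) p) = M_class p')"
    unfolding funpow_rho_M_M_class by metis
  finally show ?thesis
    unfolding M_class_eq_iff by blast
qed

lemma topspace_Mhat_top: "topspace Mhat_top = range Mhat_class"
  unfolding Mhat_top_def topspace_quotient_topology[OF equiv_Z3_rel] topspace_M_top quotient_def Mhat_class_def
  by blast

lemma openin_Mhat_top: "openin Mhat_top U \<longleftrightarrow> U \<subseteq> range Mhat_class \<and> open (Mhat_class -` U)"
proof (cases "U \<subseteq> range Mhat_class")
  case True
  have M: "topspace M_top = UNIV // M_rel"
    unfolding M_top_def using topspace_quotient_topology[of euclidean M_rel] equiv_M_rel by simp
  have U: "U \<subseteq> topspace M_top // Z3_rel"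
    using True topspace_Mhat_top unfolding Mhat_top_def topspace_quotient_topology[OF equiv_Z3_rel] by simp
  have "openin Mhat_top U \<longleftrightarrow> openin M_top {c \<in> topspace M_top. Z3_rel `` {c} \<in> U}"
    unfolding Mhat_top_def by (rule openin_quotient_topology_iff_vimage[OF equiv_Z3_rel U])
  also have "\<dots> \<longleftrightarrow> open {x. M_rel `` {x} \<in> {c \<in> topspace M_top. Z3_rel `` {c} \<in> U}}"
    unfolding M_top_def
    using openin_quotient_topology_iff_vimage[of euclidean M_rel] equiv_M_rel M[unfolded M_top_def] by auto
  also have "{x. M_rel `` {x} \<in> {c \<in> topspace M_top. Z3_rel `` {c} \<in> U}} = Mhat_class -` U"
    by (auto simp: topspace_M_top Mhat_class_def M_class_def)
  finally show ?thesis
    using True by simp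
next
  case False
  then show ?thesis
    using openin_subset topspace_Mhat_top by blast
qed

definition pt_x1 :: "pt \<Rightarrow> real" where "pt_x1 p = fst p"
definition pt_x2 :: "pt \<Rightarrow> real" where "pt_x2 p = fst (snd p)"
definition pt_y1 :: "pt \<Rightarrow> real" where "pt_y1 p = fst (snd (snd p))"
definition pt_y2 :: "pt \<Rightarrow> real" where "pt_y2 p = fst (snd (snd (snd p)))"
definition pt_z1 :: "pt \<Rightarrow> real" where "pt_z1 p = fst (snd (snd (snd (snd p))))"
definition pt_z2 :: "pt \<Rightarrow> real" where "pt_z2 p = fst (snd (snd (snd (snd (snd p)))))"
definition pt_v1 :: "pt \<Rightarrow> real" where "pt_v1 p = fst (snd (snd (snd (snd (snd (snd p))))))"
definition pt_v2 :: "pt \<Rightarrow> real" where "pt_v2 p = snd (snd (snd (snd (snd (snd (snd p))))))"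

lemmas pt_coord_defs = pt_x1_def pt_x2_def pt_y1_def pt_y2_def pt_z1_def pt_z2_def pt_v1_def pt_v2_def

lemma pt_coords [simp]:
  "pt_x1 (x1, x2, y1, y2, z1, z2, v1, v2) = x1" "pt_x2 (x1, x2, y1, y2, z1, z2, v1, v2) = x2"
  "pt_y1 (x1, x2, y1, y2, z1, z2, v1, v2) = y1" "pt_y2 (x1, x2, y1, y2, z1, z2, v1, v2) = y2"
  "pt_z1 (x1, x2, y1, y2, z1, z2, v1, v2) = z1" "pt_z2 (x1, x2, y1, y2, z1, z2, v1, v2) = z2"
  "pt_v1 (x1, x2, y1, y2, z1, z2, v1, v2) = v1" "pt_v2 (x1, x2, y1, y2, z1, z2, v1, v2) = v2"
  by (simp_all add: pt_coord_defs)

lemma pt_eq_iff_coords: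
  "(p::pt) = p' \<longleftrightarrow> pt_x1 p = pt_x1 p' \<and> pt_x2 p = pt_x2 p' \<and> pt_y1 p = pt_y1 p' \<and> pt_y2 p = pt_y2 p' \<and>
     pt_z1 p = pt_z1 p' \<and> pt_z2 p = pt_z2 p' \<and> pt_v1 p = pt_v1 p' \<and> pt_v2 p = pt_v2 p'"
  by (cases p rule: pt_cases; cases p' rule: pt_cases) simp

lemma continuous_on_pt_coords [continuous_intros]:
  "continuous_on S pt_x1" "continuous_on S pt_x2" "continuous_on S pt_y1" "continuous_on S pt_y2"
  "continuous_on S pt_z1" "continuous_on S pt_z2" "continuous_on S pt_v1" "continuous_on S pt_v2"
  unfolding pt_coord_defs by (intro continuous_intros)+

lemma abs_pt_coords_le_dist:
  "\<bar>pt_x1 p - pt_x1 p'\<bar> \<le> dist p p'" "\<bar>pt_x2 p - pt_x2 p'\<bar> \<le> dist p p'"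
  "\<bar>pt_y1 p - pt_y1 p'\<bar> \<le> dist p p'" "\<bar>pt_y2 p - pt_y2 p'\<bar> \<le> dist p p'"
  "\<bar>pt_z1 p - pt_z1 p'\<bar> \<le> dist p p'" "\<bar>pt_z2 p - pt_z2 p'\<bar> \<le> dist p p'"
  "\<bar>pt_v1 p - pt_v1 p'\<bar> \<le> dist p p'" "\<bar>pt_v2 p - pt_v2 p'\<bar> \<le> dist p p'"
  unfolding pt_coord_defs dist_real_def[symmetric]
  by (meson dist_fst_le dist_snd_le order_trans)+

lemma mul_eq_coords:
  "mul g p = (pt_x1 p + pt_x1 g, pt_x2 p + pt_x2 g, pt_y1 p + pt_y1 g, pt_y2 p + pt_y2 g,
     pt_z1 p + pt_z1 g, pt_z2 p + pt_z2 g,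
     pt_v1 p + pt_v1 g + (pt_y1 g - pt_y2 g) * pt_z1 p - (pt_y1 g + 2 * pt_y2 g) * pt_z2 p,
     pt_v2 p + pt_v2 g - (2 * pt_y1 g + pt_y2 g) * pt_z1 p + (pt_y2 g - pt_y1 g) * pt_z2 p)"
  by (cases g rule: pt_cases; cases p rule: pt_cases) simp

lemma rho_eq_coords:
  "rho p = (- pt_x1 p - pt_x2 p, pt_x1 p, - pt_y1 p - pt_y2 p, pt_y1 p,
     - pt_z1 p - pt_z2 p, pt_z1 p, - pt_v1 p - pt_v2 p, pt_v1 p)"
  by (cases p rule: pt_cases) simp

definition deck_map :: "pt \<Rightarrow> nat \<Rightarrow> pt \<Rightarrow> pt" where
  "deck_map g k p = mul g ((rho ^^ k) p)"

lemma continuous_on_deck_map: "continuous_on S (deck_map g k)"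
proof -
  have "continuous_on UNIV rho"
    unfolding rho_eq_coords by (intro continuous_intros)
  then have rho_k: "continuous_on UNIV (rho ^^ k)"
    by (induction k) (auto intro: continuous_on_compose2 simp: continuous_on_id)
  have "continuous_on UNIV (mul g)"
    unfolding mul_eq_coords by (intro continuous_intros)
  then have "continuous_on UNIV (mul g \<circ> (rho ^^ k))"
    using continuous_on_compose[OF rho_k continuous_on_subset] by blast
  then show ?thesis
    unfolding deck_map_def comp_def by (rule continuous_on_subset) simp
qed

lemma deck_map_linepath: "deck_map g k (linepath a b s) = linepath (deck_map g k a) (deck_map g k b) s"
proof -
  have rho: "rho (linepath a b s) = linepath (rho a) (rho b) s" for a b
    by (cases a rule: pt_cases; cases b rule: pt_cases) (simp add: linepath_def algebra_simps)
  have mul: "mul g (linepath a b s) = linepath (mul g a) (mul g b) s" for a b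
    by (cases g rule: pt_cases; cases a rule: pt_cases; cases b rule: pt_cases) (simp add: linepath_def algebra_simps)
  have "(rho ^^ k) (linepath a b s) = linepath ((rho ^^ k) a) ((rho ^^ k) b) s"
    by (induction k) (simp_all add: rho)
  then show ?thesis
    by (simp add: deck_map_def mul)
qed

lemma deck_map_comp: "deck_map g k \<circ> deck_map h j = deck_map (mul g ((rho ^^ k) h)) ((k + j) mod 3)"
  by (simp add: fun_eq_iff deck_map_def funpow_rho_mul mul_assoc funpow_add funpow_rho_mod[of "k + j", symmetric])

lemma deck_map_0_0: "deck_map 0 0 = id"
  by (simp add: fun_eq_iff deck_map_def mul_zero_left)

lemma deck_map_0_as_comp: "deck_map g 0 = deck_map g 1 \<circ> deck_map 0 2"
  by (simp add: fun_eq_iff deck_map_def mul_zero_left numeral_2_eq_2 rho_rho_rho)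

text \<open>For \<open>k = 1, 2\<close> the map \<open>\<rho>\<^sup>k - 1\<close> is invertible on each pair of coordinates; the \<open>v\<close>-coordinates
  of the fixed point are solved last, after its \<open>z\<close>-coordinates are known.\<close>

lemma deck_map_1_fixed_point: "\<exists>a. deck_map g 1 a = a"
proof -
  obtain g1 g2 g3 g4 g5 g6 g7 g8 where g: "g = (g1, g2, g3, g4, g5, g6, g7, g8)"
    by (rule pt_cases)
  define a5 where "a5 = (g5 - g6) / 3"
  define a6 where "a6 = (g5 + 2 * g6) / 3"
  define c7 where "c7 = g7 + (g3 - g4) * (- a5 - a6) - (g3 + 2 * g4) * a5"
  define c8 where "c8 = g8 - (2 * g3 + g4) * (- a5 - a6) + (g4 - g3) * a5"
  let ?a = "((g1 - g2) / 3, (g1 + 2 * g2) / 3, (g3 - g4) / 3, (g3 + 2 * g4) / 3, a5, a6,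
             (c7 - c8) / 3, (c7 + 2 * c8) / 3)"
  have "deck_map g 1 ?a = ?a"
    unfolding deck_map_def g by (simp add: a5_def a6_def c7_def c8_def field_simps)
  then show ?thesis
    by blast
qed

lemma deck_map_2_fixed_point: "\<exists>a. deck_map g 2 a = a"
proof -
  obtain g1 g2 g3 g4 g5 g6 g7 g8 where g: "g = (g1, g2, g3, g4, g5, g6, g7, g8)"
    by (rule pt_cases)
  define a5 where "a5 = (g6 + 2 * g5) / 3"
  define a6 where "a6 = (g6 - g5) / 3"
  define c7 where "c7 = g7 + (g3 - g4) * a6 - (g3 + 2 * g4) * (- a5 - a6)"
  define c8 where "c8 = g8 - (2 * g3 + g4) * a6 + (g4 - g3) * (- a5 - a6)"
  let ?a = "((g2 + 2 * g1) / 3, (g2 - g1) / 3, (g4 + 2 * g3) / 3, (g4 - g3) / 3, a5, a6,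
             (c8 + 2 * c7) / 3, (c8 - c7) / 3)"
  have "deck_map g 2 ?a = ?a"
    unfolding deck_map_def g numeral_2_eq_2 by (simp add: a5_def a6_def c7_def c8_def field_simps)
  then show ?thesis
    by blast
qed

lemma Mhat_class_eq_iff_deck_map:
  "Mhat_class p = Mhat_class p' \<longleftrightarrow> (\<exists>g\<in>Lambda. \<exists>k<3. p' = deck_map g k p)"
  unfolding Mhat_class_eq_iff deck_map_def ..

lemma continuous_map_Mhat_class: "continuous_map euclidean Mhat_top Mhat_class"
  unfolding continuous_map_def topspace_Mhat_top openin_Mhat_top by (auto simp: vimage_def)

lemma openin_Mhat_class_image:
  assumes "open V"
  shows "openin Mhat_top (Mhat_class ` V)"
proof -
  have "Mhat_class -` (Mhat_class ` V) = (\<Union>g\<in>Lambda. \<Union>k\<in>{..<3}. deck_map g k -` V)"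
  proof (intro equalityI subsetI)
    fix x assume "x \<in> Mhat_class -` (Mhat_class ` V)"
    then obtain v where "v \<in> V" "Mhat_class x = Mhat_class v"
      by auto
    then show "x \<in> (\<Union>g\<in>Lambda. \<Union>k\<in>{..<3}. deck_map g k -` V)"
      unfolding Mhat_class_eq_iff_deck_map by auto
  next
    fix x assume "x \<in> (\<Union>g\<in>Lambda. \<Union>k\<in>{..<3}. deck_map g k -` V)"
    then obtain g k where "g \<in> Lambda" "k < 3" "deck_map g k x \<in> V"
      by auto
    moreover from this have "Mhat_class x = Mhat_class (deck_map g k x)"
      unfolding Mhat_class_eq_iff_deck_map by blast
    ultimately show "x \<in> Mhat_class -` (Mhat_class ` V)"
      by auto
  qed
  moreover have "open (\<Union>g\<in>Lambda. \<Union>k\<in>{..<3}. deck_map g k -` V)"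
    using assms continuous_on_deck_map by (intro open_UN ballI open_vimage)
  ultimately show ?thesis
    unfolding openin_Mhat_top by auto
qed

section \<open>Local behaviour of the deck maps\<close>

definition coord_close :: "pt \<Rightarrow> pt \<Rightarrow> real \<Rightarrow> bool" where
  "coord_close x y d \<longleftrightarrow>
     \<bar>pt_x1 x - pt_x1 y\<bar> < d \<and> \<bar>pt_x2 x - pt_x2 y\<bar> < d \<and> \<bar>pt_y1 x - pt_y1 y\<bar> < d \<and> \<bar>pt_y2 x - pt_y2 y\<bar> < d \<and>
     \<bar>pt_z1 x - pt_z1 y\<bar> < d \<and> \<bar>pt_z2 x - pt_z2 y\<bar> < d \<and> \<bar>pt_v1 x - pt_v1 y\<bar> < d \<and> \<bar>pt_v2 x - pt_v2 y\<bar> < d"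

lemma coord_close_sym: "coord_close x y d \<Longrightarrow> coord_close y x d"
  unfolding coord_close_def by (simp add: abs_minus_commute)

lemma coord_close_trans: "coord_close x y d \<Longrightarrow> coord_close y z e \<Longrightarrow> coord_close x z (d + e)"
proof -
  have tri: "\<bar>a - c\<bar> < d + e" if "\<bar>a - b\<bar> < d" "\<bar>b - c\<bar> < e" for a b c :: real
    using that by linarith
  show "coord_close x y d \<Longrightarrow> coord_close y z e \<Longrightarrow> coord_close x z (d + e)"
    unfolding coord_close_def by (elim conjE) (intro conjI; rule tri; assumption)
qed

lemma coord_close_mono: "coord_close x y d \<Longrightarrow> d \<le> e \<Longrightarrow> coord_close x y e"
  unfolding coord_close_def by (elim conjE) (intro conjI; rule less_le_trans; assumption)

lemma dist_less_imp_coord_close: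
  assumes "dist x y < d"
  shows "coord_close x y d"
  using abs_pt_coords_le_dist[of x y] le_less_trans[OF _ assms] by (simp add: coord_close_def)

lemma eq_if_coord_close:
  assumes "\<And>d. d > 0 \<Longrightarrow> coord_close x y d"
  shows "x = y"
proof -
  have small: "a = b" if "\<And>d. d > 0 \<Longrightarrow> \<bar>a - b\<bar> < d" for a b :: real
    using that[of "\<bar>a - b\<bar>"] by (cases "a = b") auto
  show ?thesis
    unfolding pt_eq_iff_coords by (intro conjI small) (use assms in \<open>auto simp: coord_close_def\<close>)
qed

lemma Lambda_coords_Ints:
  assumes "g \<in> Lambda"
  shows "pt_x1 g \<in> \<int>" "pt_x2 g \<in> \<int>" "pt_y1 g \<in> \<int>" "pt_y2 g \<in> \<int>"
    "pt_z1 g \<in> \<int>" "pt_z2 g \<in> \<int>" "pt_v1 g \<in> \<int>" "pt_v2 g \<in> \<int>"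
proof -
  obtain g1 g2 g3 g4 g5 g6 g7 g8 where "g = (g1, g2, g3, g4, g5, g6, g7, g8)"
    by (rule pt_cases)
  with assms show "pt_x1 g \<in> \<int>" "pt_x2 g \<in> \<int>" "pt_y1 g \<in> \<int>" "pt_y2 g \<in> \<int>"
    "pt_z1 g \<in> \<int>" "pt_z2 g \<in> \<int>" "pt_v1 g \<in> \<int>" "pt_v2 g \<in> \<int>"
    by (simp_all add: Lambda_iff_Ints)
qed

lemma mul_Lambda_eq_if_coord_close:
  assumes "g \<in> Lambda" and "g' \<in> Lambda" and "coord_close (mul g r) (mul g' r) 1"
  shows "mul g r = mul g' r"
proof -
  have ints_close_eq: "a = b" if "a \<in> \<int>" "b \<in> \<int>" "\<bar>(c + a) - (c + b)\<bar> < 1" for a b c :: real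
    using Ints_eq_abs_less1[of a b] that by simp
  note I = Lambda_coords_Ints[OF assms(1)] Lambda_coords_Ints[OF assms(2)]
  note c = assms(3)[unfolded coord_close_def mul_eq_coords pt_coords]
  have e1: "pt_x1 g = pt_x1 g'"
    using c I by (intro ints_close_eq[of _ _ "pt_x1 r"]) (simp_all add: add.commute)
  have e2: "pt_x2 g = pt_x2 g'"
    using c I by (intro ints_close_eq[of _ _ "pt_x2 r"]) (simp_all add: add.commute)
  have e3: "pt_y1 g = pt_y1 g'"
    using c I by (intro ints_close_eq[of _ _ "pt_y1 r"]) (simp_all add: add.commute)
  have e4: "pt_y2 g = pt_y2 g'"
    using c I by (intro ints_close_eq[of _ _ "pt_y2 r"]) (simp_all add: add.commute)
  have e5: "pt_z1 g = pt_z1 g'"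
    using c I by (intro ints_close_eq[of _ _ "pt_z1 r"]) (simp_all add: add.commute)
  have e6: "pt_z2 g = pt_z2 g'"
    using c I by (intro ints_close_eq[of _ _ "pt_z2 r"]) (simp_all add: add.commute)
  have e7: "pt_v1 g = pt_v1 g'"
    using c I e3 e4
    by (intro ints_close_eq[of _ _ "pt_v1 r + (pt_y1 g - pt_y2 g) * pt_z1 r - (pt_y1 g + 2 * pt_y2 g) * pt_z2 r"])
      (simp_all add: algebra_simps)
  have e8: "pt_v2 g = pt_v2 g'"
    using c I e3 e4
    by (intro ints_close_eq[of _ _ "pt_v2 r - (2 * pt_y1 g + pt_y2 g) * pt_z1 r + (pt_y2 g - pt_y1 g) * pt_z2 r"])
      (simp_all add: algebra_simps)
  show ?thesis
    unfolding mul_eq_coords using e1 e2 e3 e4 e5 e6 e7 e8 by simp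
qed

lemma coord_close_rho:
  assumes "coord_close a b e"
  shows "coord_close (rho a) (rho b) (2 * e)"
proof -
  have c: "\<bar>pt_x1 a - pt_x1 b\<bar> < e" "\<bar>pt_x2 a - pt_x2 b\<bar> < e" "\<bar>pt_y1 a - pt_y1 b\<bar> < e"
    "\<bar>pt_y2 a - pt_y2 b\<bar> < e" "\<bar>pt_z1 a - pt_z1 b\<bar> < e" "\<bar>pt_z2 a - pt_z2 b\<bar> < e"
    "\<bar>pt_v1 a - pt_v1 b\<bar> < e" "\<bar>pt_v2 a - pt_v2 b\<bar> < e"
    using assms unfolding coord_close_def by auto
  have pair: "\<bar>(- a1 - a2) - (- b1 - b2)\<bar> < 2 * e" if "\<bar>a1 - b1\<bar> < e" "\<bar>a2 - b2\<bar> < e"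
    for a1 a2 b1 b2 :: real
    using that by linarith
  have single: "\<bar>a - b\<bar> < 2 * e" if "\<bar>a - b\<bar> < e" for a b :: real
    using that by linarith
  show ?thesis
    unfolding coord_close_def rho_eq_coords pt_coords
    using pair[OF c(1,2)] pair[OF c(3,4)] pair[OF c(5,6)] pair[OF c(7,8)]
      single[OF c(1)] single[OF c(3)] single[OF c(5)] single[OF c(7)] by simp
qed

lemma coord_close_funpow_rho:
  assumes close: "coord_close a b e" and k: "k < 3"
  shows "coord_close ((rho ^^ k) a) ((rho ^^ k) b) (4 * e)"
proof -
  have "e > 0"
    using close unfolding coord_close_def by linarith
  have "k = 0 \<or> k = 1 \<or> k = 2"
    using k by linarith
  then show ?thesis
  proof (elim disjE)
    assume "k = 0"
    then show ?thesis
      using coord_close_mono[OF close] \<open>e > 0\<close> by simp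
  next
    assume "k = 1"
    then show ?thesis
      using coord_close_mono[OF coord_close_rho[OF close]] \<open>e > 0\<close> by simp
  next
    assume "k = 2"
    then show ?thesis
      using coord_close_rho[OF coord_close_rho[OF close]] by (simp add: numeral_2_eq_2)
  qed
qed

lemma deck_map_orbit_isolated:
  "\<exists>\<delta>>0. \<forall>g\<in>Lambda. coord_close (deck_map g k f) f \<delta> \<longrightarrow> deck_map g k f = f"
proof (cases "\<exists>g0\<in>Lambda. coord_close (deck_map g0 k f) f (1/2) \<and> deck_map g0 k f \<noteq> f")
  case True
  then obtain g0 where g0: "g0 \<in> Lambda" "coord_close (deck_map g0 k f) f (1/2)" "deck_map g0 k f \<noteq> f"
    by blast
  then obtain d where "d > 0" and far: "\<not> coord_close (deck_map g0 k f) f d"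
    using eq_if_coord_close by blast
  have "deck_map g k f = f"
    if g: "g \<in> Lambda" and near: "coord_close (deck_map g k f) f (min (1/2) d)" for g
  proof -
    have "coord_close (deck_map g k f) f (1/2)"
      using coord_close_mono[OF near] by simp
    from coord_close_trans[OF this coord_close_sym[OF g0(2)]]
    have "coord_close (deck_map g k f) (deck_map g0 k f) 1"
      by simp
    then have "deck_map g k f = deck_map g0 k f"
      unfolding deck_map_def using mul_Lambda_eq_if_coord_close g g0(1) by simp
    then show ?thesis
      using far coord_close_mono[OF near, of d] by simp
  qed
  then show ?thesis
    using \<open>d > 0\<close> by (intro exI[of _ "min (1/2) d"]) auto
next
  case False
  then show ?thesis
    by (intro exI[of _ "1/2"]) auto
qed

lemma abs_affine_bound:
  fixes w x y a b c M1 M2 :: real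
  assumes "\<bar>w\<bar> < c" "\<bar>x\<bar> < c" "\<bar>y\<bar> < c" "\<bar>a\<bar> \<le> M1" "\<bar>b\<bar> \<le> M2"
  shows "\<bar>w + a * x + b * y\<bar> < c + M1 * c + M2 * c"
proof -
  have "\<bar>a * x\<bar> \<le> M1 * c" unfolding abs_mult
    using assms by (intro mult_mono) auto
  moreover have "\<bar>b * y\<bar> \<le> M2 * c" unfolding abs_mult
    using assms by (intro mult_mono) auto
  ultimately show ?thesis using assms(1) by (smt (verit) abs_triangle_ineq)
qed

lemma coord_close_mul:
  assumes close: "coord_close r r' c" and y: "\<bar>pt_y1 g\<bar> \<le> A" "\<bar>pt_y2 g\<bar> \<le> A"
  shows "coord_close (mul g r) (mul g r') (c * (1 + 5 * A))"
proof -
  have d: "\<bar>pt_x1 r - pt_x1 r'\<bar> < c" "\<bar>pt_x2 r - pt_x2 r'\<bar> < c" "\<bar>pt_y1 r - pt_y1 r'\<bar> < c" "\<bar>pt_y2 r - pt_y2 r'\<bar> < c"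
    "\<bar>pt_z1 r - pt_z1 r'\<bar> < c" "\<bar>pt_z2 r - pt_z2 r'\<bar> < c" "\<bar>pt_v1 r - pt_v1 r'\<bar> < c" "\<bar>pt_v2 r - pt_v2 r'\<bar> < c"
    using close unfolding coord_close_def by auto
  have "c > 0" "A \<ge> 0"
    using d(1) y(1) by linarith+
  then have le: "c \<le> c * (1 + 5 * A)"
    by simp
  have "\<bar>(pt_v1 r - pt_v1 r') + (pt_y1 g - pt_y2 g) * (pt_z1 r - pt_z1 r')
      + (- (pt_y1 g + 2 * pt_y2 g)) * (pt_z2 r - pt_z2 r')\<bar> < c + 2 * A * c + 3 * A * c"
    by (rule abs_affine_bound[OF d(7) d(5) d(6)]) (use y in linarith)+
  moreover have "\<bar>(pt_v2 r - pt_v2 r') + (- (2 * pt_y1 g + pt_y2 g)) * (pt_z1 r - pt_z1 r')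
      + (pt_y2 g - pt_y1 g) * (pt_z2 r - pt_z2 r')\<bar> < c + 3 * A * c + 2 * A * c"
    by (rule abs_affine_bound[OF d(8) d(5) d(6)]) (use y in linarith)+
  ultimately show ?thesis
    unfolding coord_close_def mul_eq_coords pt_coords
    using less_le_trans[OF d(1) le] less_le_trans[OF d(2) le] less_le_trans[OF d(3) le]
      less_le_trans[OF d(4) le] less_le_trans[OF d(5) le] less_le_trans[OF d(6) le]
    by (simp add: algebra_simps)
qed

text \<open>A bound on the \<open>y\<close>-coordinates of any \<open>g\<close> for which \<open>deck_map g k\<close> moves a point near \<open>f\<close>
  to a point near \<open>f\<close>; these coordinates are the shear coefficients with which the \<open>z\<close>-coordinates
  enter the \<open>v\<close>-coordinates of \<open>mul g\<close>.\<close>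

definition shear_bound :: "pt \<Rightarrow> nat \<Rightarrow> real" where
  "shear_bound f k = \<bar>pt_y1 f\<bar> + \<bar>pt_y2 f\<bar> + \<bar>pt_y1 ((rho ^^ k) f)\<bar> + \<bar>pt_y2 ((rho ^^ k) f)\<bar> + 5"

lemma coord_close_deck_map_centre:
  assumes k: "k < 3" and e: "e \<le> 1" and p: "dist p f < e" and gp: "dist (deck_map g k p) f < e"
  shows "coord_close (deck_map g k f) f (e * (5 + 20 * shear_bound f k))"
proof -
  define r where "r = (rho ^^ k) f"
  define r' where "r' = (rho ^^ k) p"
  have "coord_close f p e"
    using coord_close_sym[OF dist_less_imp_coord_close[OF p]] .
  then have rr': "coord_close r r' (4 * e)"
    unfolding r_def r'_def using k by (rule coord_close_funpow_rho)
  have gr': "coord_close (mul g r') f e"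
    using dist_less_imp_coord_close[OF gp] unfolding deck_map_def r'_def .
  have "\<bar>pt_y1 g\<bar> \<le> \<bar>pt_y1 r' + pt_y1 g - pt_y1 f\<bar> + \<bar>pt_y1 f\<bar> + \<bar>pt_y1 r\<bar> + \<bar>pt_y1 r - pt_y1 r'\<bar>"
    "\<bar>pt_y2 g\<bar> \<le> \<bar>pt_y2 r' + pt_y2 g - pt_y2 f\<bar> + \<bar>pt_y2 f\<bar> + \<bar>pt_y2 r\<bar> + \<bar>pt_y2 r - pt_y2 r'\<bar>"
    by linarith+
  moreover have "\<bar>pt_y1 r - pt_y1 r'\<bar> < 4 * e" "\<bar>pt_y2 r - pt_y2 r'\<bar> < 4 * e"
    using rr' unfolding coord_close_def by auto
  moreover have "\<bar>pt_y1 r' + pt_y1 g - pt_y1 f\<bar> < e" "\<bar>pt_y2 r' + pt_y2 g - pt_y2 f\<bar> < e"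
    using gr' unfolding coord_close_def mul_eq_coords pt_coords by auto
  ultimately have "\<bar>pt_y1 g\<bar> \<le> shear_bound f k" "\<bar>pt_y2 g\<bar> \<le> shear_bound f k"
    using e unfolding shear_bound_def r_def[symmetric] by linarith+
  from coord_close_mul[OF rr' this] gr'
  have "coord_close (mul g r) f (4 * e * (1 + 5 * shear_bound f k) + e)"
    by (rule coord_close_trans)
  then show ?thesis
    unfolding deck_map_def r_def[symmetric] by (rule coord_close_mono) (simp add: algebra_simps)
qed

text \<open>A deck map moving a point near \<open>f\<close> to a point near \<open>f\<close> moves \<open>f\<close> itself by little (estimate
  above), while the points \<open>deck_map g k f\<close> with \<open>g \<in> Lambda\<close> do not accumulate at \<open>f\<close>.\<close>

lemma deck_map_locally_fixing:
  assumes k: "k < 3"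
  shows "\<exists>\<epsilon>>0. \<forall>g\<in>Lambda. \<forall>p. dist p f < \<epsilon> \<longrightarrow> dist (deck_map g k p) f < \<epsilon> \<longrightarrow> deck_map g k f = f"
proof -
  obtain \<delta> where "\<delta> > 0" and isolated: "\<forall>g\<in>Lambda. coord_close (deck_map g k f) f \<delta> \<longrightarrow> deck_map g k f = f"
    using deck_map_orbit_isolated by blast
  define A where "A = shear_bound f k"
  have "A \<ge> 0"
    unfolding A_def shear_bound_def by simp
  define \<epsilon> where "\<epsilon> = min 1 (\<delta> / (5 + 20 * A))"
  have \<epsilon>: "0 < \<epsilon>" "\<epsilon> \<le> 1"
    unfolding \<epsilon>_def using \<open>\<delta> > 0\<close> \<open>A \<ge> 0\<close> by auto
  have "\<epsilon> \<le> \<delta> / (5 + 20 * A)"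
    unfolding \<epsilon>_def by simp
  then have bound: "\<epsilon> * (5 + 20 * shear_bound f k) \<le> \<delta>"
    using \<open>A \<ge> 0\<close> unfolding A_def by (simp add: pos_le_divide_eq)
  have "deck_map g k f = f"
    if "g \<in> Lambda" "dist p f < \<epsilon>" "dist (deck_map g k p) f < \<epsilon>" for g p
    using coord_close_mono[OF coord_close_deck_map_centre[OF k \<epsilon>(2) that(2,3)] bound] that(1) isolated
    by blast
  then show ?thesis
    using \<epsilon>(1) by blast
qed

lemma deck_maps_locally_fixing:
  "\<exists>e>0. \<forall>g\<in>Lambda. \<forall>k<3. \<forall>p\<in>ball f e. deck_map g k p \<in> ball f e \<longrightarrow> deck_map g k f = f"
proof -
  have "\<forall>k\<in>{..<3}. \<exists>\<epsilon>>0. \<forall>g\<in>Lambda. \<forall>p. dist p f < \<epsilon> \<longrightarrow> dist (deck_map g k p) f < \<epsilon> \<longrightarrow> deck_map g k f = f"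
    using deck_map_locally_fixing by blast
  then obtain \<epsilon> where \<epsilon>: "\<forall>k\<in>{..<3}. \<epsilon> k > 0 \<and>
      (\<forall>g\<in>Lambda. \<forall>p. dist p f < \<epsilon> k \<longrightarrow> dist (deck_map g k p) f < \<epsilon> k \<longrightarrow> deck_map g k f = f)"
    unfolding bchoice_iff by blast
  define e where "e = min (\<epsilon> 0) (min (\<epsilon> 1) (\<epsilon> 2))"
  have e_le: "e \<le> \<epsilon> k" if "k < 3" for k
  proof -
    have "k = 0 \<or> k = 1 \<or> k = 2"
      using that by linarith
    then show ?thesis
      by (auto simp: e_def)
  qed
  have "e > 0"
    using \<epsilon> by (simp add: e_def)
  moreover have "deck_map g k f = f"
    if g: "g \<in> Lambda" and k: "k < 3" and p: "p \<in> ball f e" "deck_map g k p \<in> ball f e" for g k p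
  proof -
    have "dist p f < \<epsilon> k" "dist (deck_map g k p) f < \<epsilon> k"
      using p e_le[OF k] by (simp_all add: dist_commute)
    moreover have "\<forall>g\<in>Lambda. \<forall>p. dist p f < \<epsilon> k \<longrightarrow> dist (deck_map g k p) f < \<epsilon> k \<longrightarrow> deck_map g k f = f"
      using \<epsilon> k by blast
    ultimately show ?thesis
      using g by blast
  qed
  ultimately show ?thesis
    by blast
qed

definition deck_maps :: "(pt \<Rightarrow> pt) set" where
  "deck_maps = {deck_map g k | g k. g \<in> Lambda \<and> k < 3}"

lemma deck_map_in_deck_maps: "\<lbrakk>g \<in> Lambda; k < 3\<rbrakk> \<Longrightarrow> deck_map g k \<in> deck_maps"
  unfolding deck_maps_def by blast

lemma deck_mapsE:
  assumes "h \<in> deck_maps"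
  obtains g k where "h = deck_map g k" and "g \<in> Lambda" and "k < 3"
  using assms unfolding deck_maps_def by blast

interpretation Mhat: deck_quotient Mhat_top Mhat_class deck_maps
proof unfold_locales
  have id_in: "id \<in> deck_maps"
    using deck_map_in_deck_maps[OF zero_in_Lambda, of 0] by (simp add: deck_map_0_0)
  show "continuous_map euclidean Mhat_top Mhat_class"
    by (rule continuous_map_Mhat_class)
  show "openin Mhat_top (Mhat_class ` V)" if "open V" for V
    using that by (rule openin_Mhat_class_image)
  show "topspace Mhat_top = range Mhat_class"
    by (rule topspace_Mhat_top)
  show "Mhat_class a = Mhat_class b \<longleftrightarrow> (\<exists>h\<in>deck_maps. h a = b)" for a b
    unfolding Mhat_class_eq_iff_deck_map deck_maps_def by blast
  show "id \<in> deck_maps"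
    by (rule id_in)
  show "h \<circ> h' \<in> deck_maps" if "h \<in> deck_maps" "h' \<in> deck_maps" for h h'
    using that
    by (auto elim!: deck_mapsE simp: deck_map_comp intro!: deck_map_in_deck_maps mul_in_Lambda funpow_rho_in_Lambda)
  show "h (linepath a b s) = linepath (h a) (h b) s" if "h \<in> deck_maps" for h a b s
    using that by (auto elim!: deck_mapsE simp: deck_map_linepath)
  show "continuous_on UNIV h" if "h \<in> deck_maps" for h
    using that by (auto elim!: deck_mapsE simp: continuous_on_deck_map)
  show "\<exists>e>0. \<forall>h\<in>deck_maps. \<forall>p\<in>ball f e. h p \<in> ball f e \<longrightarrow> h f = f" for f
    using deck_maps_locally_fixing[of f] by (auto elim!: deck_mapsE)
  show "\<exists>h1\<in>deck_maps. \<exists>h2\<in>deck_maps. h = h1 \<circ> h2 \<and> (\<exists>a. h1 a = a) \<and> (\<exists>b. h2 b = b)"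
    if h_deck: "h \<in> deck_maps" for h
  proof -
    obtain g k where h: "h = deck_map g k" and g: "g \<in> Lambda" and "k < 3"
      using h_deck by (rule deck_mapsE)
    then consider "k = 0" | "k = 1" | "k = 2"
      by linarith
    then show ?thesis
    proof cases
      case 1
      obtain a where "deck_map g 1 a = a"
        using deck_map_1_fixed_point by blast
      moreover obtain b where "deck_map 0 2 b = b"
        using deck_map_2_fixed_point by blast
      moreover have "deck_map g 1 \<in> deck_maps" "deck_map 0 2 \<in> deck_maps"
        using g zero_in_Lambda by (simp_all add: deck_map_in_deck_maps)
      ultimately show ?thesis
        using 1 h deck_map_0_as_comp by metis
    next
      case 2
      then have "\<exists>a. h a = a"
        using h deck_map_1_fixed_point by simp
      then show ?thesis
        using h_deck id_in by (metis comp_id id_apply)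
    next
      case 3
      then have "\<exists>a. h a = a"
        using h deck_map_2_fixed_point by simp
      then show ?thesis
        using h_deck id_in by (metis comp_id id_apply)
    qed
  qed
qed

theorem proposition4p2:
  shows "simply_connected_space Mhat_top"
  by (rule Mhat.simply_connected)

end
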